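(* Let $q=e^{i\phi}\in\mathbb{C}$ ($\phi\in\mathbb{R}$) be not a root of unity, with fixed square root $q^{1/2}$. Let $\mathcal{A}=SL_q(2,\mathbb{R})$ be the Hopf $*$-algebra generated by self-adjoint $a,b,c,d$ with relations $ab=q\,ba$, $ac=q\,ca$, $bc=cb$, $bd=q\,db$, $cd=q\,dc$, $da-q^{-1}bc=1=ad-q\,bc$, matrix comultiplication on $\begin{pmatrix}a&b\\c&d\end{pmatrix}$, counit the identity matrix, and antipode $S(a)=d$, $S(b)=-q^{-1}b$, $S(c)=-qc$, $S(d)=a$; let $\tau=*\circ S$. For $\mu,\nu\in\mathbb{R}$ let $\mathcal{K}_{\mu\nu}=\mathcal{A}/\mathcal{C}_{\mu\nu}\mathcal{A}$, where $\mathcal{C}_{\mu\nu}=\mathrm{span}\{a-d+2q^{1/2}\mu b,\ q\nu b+c\}$, with induced coalgebra structure, right $\mathcal{A}$-module structure and induced map $\tau$. Then: (i) If $\mu^2>\nu$, $\mathcal{K}_{\mu\nu}$ is isomorphic as a coalgebra to $\mathcal{O}(\mathbb{R}_+)$. If $\nu>0$ and $\mu/\sqrt{\nu}=\cos\phi_{\mu\nu}<1$ for some real $\phi_{\mu\nu}$ with $\cos^2\phi_{\mu\nu}\neq\cos^2(\ell\phi)$ for all $\ell\in\mathbb{Z}$, then $\mathcal{K}_{\mu\nu}$ is isomorphic as a coalgebra to $\mathcal{O}(\mathbf{S}^1)$. The coalgebras $\mathcal{K}_{\mu\nu}$ with $\nu>0$, $\mu/\sqrt{\nu}=\cos\phi_{\mu\nu}$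 and $\cos^2\phi_{\mu\nu}=\cos^2(\ell\phi)$ for some $\ell\in\mathbb{Z}$ (the special series) are mutually isomorphic as coalgebras. (ii) Let $\nu>0$, $\mu/\sqrt{\nu}=\cos\phi_{\mu\nu}\leq1$, let $n\in\mathbb{Z}$ and let $\mu_n$ be defined by $\mu_n/\sqrt{\nu}=\cos(\phi_{\mu\nu}+n\phi)$. Then $\mathcal{K}_{\mu\nu}$ and $\mathcal{K}_{\mu_n\nu}$ are isomorphic both as coalgebras and as right $\mathcal{A}$-modules (by one and the same map).
   Context: $\mathcal{O}(\mathbb{R}_+)$ and $\mathcal{O}(\mathbf{S}^1)$ denote the coordinate coalgebras of the classical groups $\mathbb{R}_+$ and $\mathbf{S}^1$: both are the Laurent polynomial coalgebra $\mathbb{C}[t,t^{-1}]$ with basis of group-like elements $t^n$, $n\in\mathbb{Z}$ ($\Delta t^n=t^n\otimes t^n$, $\varepsilon(t^n)=1$), equipped with the real structure $\tau(t^n)=t^{-n}$ for $\mathbb{R}_+$ and $\tau(t^n)=t^n$ for $\mathbf{S}^1$. The right ideal $\mathcal{C}_{\mu\nu}\mathcal{A}$ is a $\tau$-invariant two-sided coideal, so the quotient inherits coalgebra and right module structures and $\tau$. *)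

theory Defs
  imports Complex_Main "HOL-Library.Function_Algebras"
begin

datatype gen = GA | GB | GC | GD

fun grow :: "gen \<Rightarrow> nat" where
  "grow GA = 1" | "grow GB = 1" | "grow GC = 2" | "grow GD = 2"
fun gcol :: "gen \<Rightarrow> nat" where
  "gcol GA = 1" | "gcol GB = 2" | "gcol GC = 1" | "gcol GD = 2"
definition gent :: "nat \<Rightarrow> nat \<Rightarrow> gen" where
  "gent i j = (if i = 1 then (if j = 1 then GA else GB) else (if j = 1 then GC else GD))"

text \<open>Elements of the free algebra: finitely supported functions on words.\<close>
type_synonym fa = "gen list \<Rightarrow> complex"

definition finsupp :: "('a \<Rightarrow> complex) set" where
  "finsupp = {f. finite {x. f x \<noteq> 0}}"

definition wmon :: "gen list \<Rightarrow> fa" where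
  "wmon w = (\<lambda>u. if u = w then 1 else 0)"

definition fsc :: "complex \<Rightarrow> ('a \<Rightarrow> complex) \<Rightarrow> ('a \<Rightarrow> complex)" where
  "fsc c f = (\<lambda>x. c * f x)"

definition fmul :: "fa \<Rightarrow> fa \<Rightarrow> fa" where
  "fmul f g = (\<lambda>w. \<Sum>k\<le>length w. f (take k w) * g (drop k w))"

definition fone :: fa where "fone = wmon []"
definition gA :: fa where "gA = wmon [GA]"
definition gB :: fa where "gB = wmon [GB]"
definition gC :: fa where "gC = wmon [GC]"
definition gD :: fa where "gD = wmon [GD]"

inductive_set lspan :: "('a \<Rightarrow> complex) set \<Rightarrow> ('a \<Rightarrow> complex) set" for S where
  lspan_zero: "0 \<in> lspan S"
| lspan_base: "x \<in> S \<Longrightarrow> x \<in> lspan S"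
| lspan_add: "x \<in> lspan S \<Longrightarrow> y \<in> lspan S \<Longrightarrow> x + y \<in> lspan S"
| lspan_scale: "x \<in> lspan S \<Longrightarrow> fsc c x \<in> lspan S"

definition slq_rels :: "complex \<Rightarrow> fa set" where
  "slq_rels q = {
     fmul gA gB - fsc q (fmul gB gA),
     fmul gA gC - fsc q (fmul gC gA),
     fmul gB gC - fmul gC gB,
     fmul gB gD - fsc q (fmul gD gB),
     fmul gC gD - fsc q (fmul gD gC),
     fmul gD gA - fsc (inverse q) (fmul gB gC) - fone,
     fmul gA gD - fsc q (fmul gB gC) - fone }"

text \<open>Generators of C_{mu nu}; s is the fixed square root of q.\<close>
definition Cgens :: "complex \<Rightarrow> complex \<Rightarrow> real \<Rightarrow> real \<Rightarrow> fa set" where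
  "Cgens q s \<mu> \<nu> = { gA - gD + fsc (2 * s * complex_of_real \<mu>) gB,
                       fsc (q * complex_of_real \<nu>) gB + gC }"

text \<open>Preimage in the free algebra of the right ideal C_{mu nu} A of A:
  the two-sided ideal of relations plus the right ideal generated by C_{mu nu}.
  Hence K_{mu nu} = (free algebra) / Jset.\<close>
definition Jset :: "complex \<Rightarrow> complex \<Rightarrow> real \<Rightarrow> real \<Rightarrow> fa set" where
  "Jset q s \<mu> \<nu> = lspan
     ({fmul (fmul x r) y | x r y. r \<in> slq_rels q \<and> x \<in> finsupp \<and> y \<in> finsupp}
      \<union> {fmul c y | c y. c \<in> Cgens q s \<mu> \<nu> \<and> y \<in> finsupp})"

text \<open>Matrix comultiplication, extended multiplicatively: the coefficient of the
  tensor u (x) v in Delta f.  For a word w = x_{i1 j1} ... x_{in jn},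
  Delta w = sum over k of (x_{i1 k1} ... x_{in kn}) (x) (x_{k1 j1} ... x_{kn jn}).\<close>
definition fcomult :: "fa \<Rightarrow> (gen list \<times> gen list \<Rightarrow> complex)" where
  "fcomult f = (\<lambda>(u, v). if length u = length v \<and> (\<forall>i<length u. gcol (u ! i) = grow (v ! i))
       then f (map2 (\<lambda>x y. gent (grow x) (gcol y)) u v) else 0)"

definition weps :: "gen list \<Rightarrow> complex" where
  "weps w = (if \<forall>x\<in>set w. x = GA \<or> x = GD then 1 else 0)"

definition feps :: "fa \<Rightarrow> complex" where
  "feps f = (\<Sum>w\<in>{w. f w \<noteq> 0}. f w * weps w)"

definition tens :: "('a \<Rightarrow> complex) \<Rightarrow> ('b \<Rightarrow> complex) \<Rightarrow> ('a \<times> 'b \<Rightarrow> complex)" where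
  "tens x y = (\<lambda>(u, v). x u * y v)"

text \<open>Kernel of the projection F (x) F -> K (x) K.\<close>
definition tsub :: "fa set \<Rightarrow> (gen list \<times> gen list \<Rightarrow> complex) set" where
  "tsub J = lspan ({tens x y | x y. x \<in> J \<and> y \<in> finsupp} \<union> {tens x y | x y. x \<in> finsupp \<and> y \<in> J})"

text \<open>phi (x) psi applied to a finitely supported element of F (x) F.\<close>
definition tmap :: "(fa \<Rightarrow> 'b \<Rightarrow> complex) \<Rightarrow> (fa \<Rightarrow> 'b \<Rightarrow> complex)
     \<Rightarrow> (gen list \<times> gen list \<Rightarrow> complex) \<Rightarrow> ('b \<times> 'b \<Rightarrow> complex)" where
  "tmap \<phi> \<psi> h = (\<lambda>(m, n). \<Sum>p\<in>{p. h p \<noteq> 0}. h p * \<phi> (wmon (fst p)) m * \<psi> (wmon (snd p)) n)"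

definition flinear :: "(('a \<Rightarrow> complex) \<Rightarrow> ('b \<Rightarrow> complex)) \<Rightarrow> bool" where
  "flinear \<phi> \<longleftrightarrow> (\<forall>f\<in>finsupp. \<forall>g\<in>finsupp. \<phi> (f + g) = \<phi> f + \<phi> g)
                 \<and> (\<forall>c. \<forall>f\<in>finsupp. \<phi> (fsc c f) = fsc c (\<phi> f))"

section \<open>The Laurent coalgebra C[t,t^-1] = O(R_+) = O(S^1) (as coalgebras)\<close>

definition lcomult :: "(int \<Rightarrow> complex) \<Rightarrow> (int \<times> int \<Rightarrow> complex)" where
  "lcomult g = (\<lambda>(m, n). if m = n then g n else 0)"

definition leps :: "(int \<Rightarrow> complex) \<Rightarrow> complex" where
  "leps g = (\<Sum>n\<in>{n. g n \<noteq> 0}. g n)"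

text \<open>F/J is isomorphic as a coalgebra to the Laurent coalgebra: a linear map
  phi on F with kernel exactly J, surjective, compatible with comultiplication and counit.\<close>
definition coalg_iso_laurent :: "fa set \<Rightarrow> bool" where
  "coalg_iso_laurent J \<longleftrightarrow> (\<exists>\<phi> :: fa \<Rightarrow> int \<Rightarrow> complex.
      flinear \<phi> \<and> \<phi> ` finsupp \<subseteq> finsupp \<and> finsupp \<subseteq> \<phi> ` finsupp
    \<and> (\<forall>f\<in>finsupp. \<phi> f = 0 \<longleftrightarrow> f \<in> J)
    \<and> (\<forall>f\<in>finsupp. tmap \<phi> \<phi> (fcomult f) = lcomult (\<phi> f) \<and> leps (\<phi> f) = feps f))"

text \<open>phi : F -> F induces a coalgebra isomorphism F/J -> F/J'.\<close>
definition coalg_iso_map :: "fa set \<Rightarrow> fa set \<Rightarrow> (fa \<Rightarrow> fa) \<Rightarrow> bool" where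
  "coalg_iso_map J J' \<phi> \<longleftrightarrow>
      flinear \<phi> \<and> \<phi> ` finsupp \<subseteq> finsupp
    \<and> (\<forall>f\<in>finsupp. \<phi> f \<in> J' \<longleftrightarrow> f \<in> J)
    \<and> (\<forall>g\<in>finsupp. \<exists>f\<in>finsupp. g - \<phi> f \<in> J')
    \<and> (\<forall>f\<in>finsupp. tmap \<phi> \<phi> (fcomult f) - fcomult (\<phi> f) \<in> tsub J' \<and> feps (\<phi> f) = feps f)"

text \<open>The induced map F/J -> F/J' is a right module map over A.\<close>
definition rmod_map :: "fa set \<Rightarrow> (fa \<Rightarrow> fa) \<Rightarrow> bool" where
  "rmod_map J' \<phi> \<longleftrightarrow> (\<forall>f\<in>finsupp. \<forall>g\<in>finsupp. \<phi> (fmul f g) - fmul (\<phi> f) g \<in> J')"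

end

theory Submission
  imports Defs
begin

text \<open>Write \<open>\<sigma> = 2 s \<mu>\<close> and \<open>\<pi> = q \<nu>\<close>, where \<open>s\<close> is the chosen square root of \<open>q\<close>, so that
  \<open>C\<^sub>\<mu>\<^sub>\<nu>\<close> is spanned by \<open>a - d + \<sigma> b\<close> and \<open>\<pi> b + c\<close>, and let \<open>\<beta>, \<beta>'\<close> be the roots of
  \<open>X\<^sup>2 - \<sigma> X + \<pi>\<close>.  For \<open>y\<^sub>B = d - B b\<close> the relations of \<open>SL\<^sub>q(2)\<close> show that left
  multiplication by \<open>y\<^sub>B\<close> maps the ideal belonging to the roots \<open>(B/q, B' q)\<close> into the one
  belonging to \<open>(B, B')\<close>, and that \<open>y\<^sub>B\<close> is invertible and group-like modulo these ideals; so it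
  induces an isomorphism of coalgebras and of right \<open>\<A>\<close>-modules between the quotients.
  Iterating replaces \<open>(\<beta>, \<beta>')\<close> by \<open>(\<beta> q\<^sup>-\<^sup>n, \<beta>' q\<^sup>n)\<close>; for \<open>q = e\<^sup>i\<^sup>\<phi>\<close> and
  \<open>\<beta>, \<beta>' = s \<surd>\<nu> e\<^sup>\<plusminus>\<^sup>i\<^sup>\<psi>\<close> this is the rotation \<open>\<psi> \<mapsto> \<psi> + n \<phi>\<close> of part (ii).  The rescaling
  \<open>b \<mapsto> t b\<close>, \<open>c \<mapsto> t\<^sup>-\<^sup>1 c\<close> is a coalgebra automorphism of the free algebra taking \<open>(\<sigma>, \<pi>)\<close>
  to \<open>(t \<sigma>, t\<^sup>2 \<pi>)\<close>; together with the rotations it identifies all members of the special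
  series.  Finally, if \<open>\<beta> q\<^sup>-\<^sup>n \<noteq> \<beta>' q\<^sup>n\<close> for all \<open>n\<close>, the generators act on \<open>\<complex>[t, t\<^sup>-\<^sup>1]\<close> by
  tridiagonal matrices that satisfy the relations and kill \<open>C\<^sub>\<mu>\<^sub>\<nu>\<close>; the orbit map of \<open>t\<^sup>0\<close>
  has kernel exactly \<open>C\<^sub>\<mu>\<^sub>\<nu>\<A>\<close> and is a coalgebra isomorphism onto the Laurent coalgebra.
  The condition holds when \<open>\<mu>\<^sup>2 > \<nu>\<close> and off the special series.\<close>

section \<open>Finitely supported functions and linear maps\<close>

lemmas fun_apply_simps = plus_fun_apply zero_fun_apply minus_apply uminus_apply fsc_def
declare plus_fun_apply[simp del] zero_fun_apply[simp del] minus_apply[simp del] uminus_apply[simp del]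

definition supp :: "('a \<Rightarrow> complex) \<Rightarrow> 'a set" where "supp f = {x. f x \<noteq> 0}"
definition pmon :: "'a \<Rightarrow> 'a \<Rightarrow> complex" where "pmon x = (\<lambda>u. if u = x then 1 else 0)"

lemma wmon_pmon: "wmon = pmon" by (simp add: wmon_def pmon_def fun_eq_iff)

lemma fsc_apply: "fsc c f x = c * f x" by (simp add: fsc_def)
lemma fsc_add: "fsc c (f + g) = fsc c f + fsc c g" by (simp add: fun_eq_iff algebra_simps fun_apply_simps)
lemma fsc_diff: "fsc c (f - g) = fsc c f - fsc c g" by (simp add: fun_eq_iff algebra_simps fun_apply_simps)
lemma fsc_plus: "fsc (c + d) f = fsc c f + fsc d f" by (simp add: fun_eq_iff algebra_simps fun_apply_simps)
lemma fsc_fsc: "fsc c (fsc d f) = fsc (c * d) f" by (simp add: fun_eq_iff fun_apply_simps)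
lemma fsc_minus1: "fsc (-1) f = - f" by (simp add: fun_eq_iff fun_apply_simps)
lemma fsc_zero[simp]: "fsc c 0 = 0" by (simp add: fun_eq_iff fun_apply_simps)
lemma fsc_0[simp]: "fsc 0 f = 0" by (simp add: fun_eq_iff fun_apply_simps)
lemma fsc_1[simp]: "fsc 1 f = f" by (simp add: fun_eq_iff fun_apply_simps)

lemma finsupp_iff: "f \<in> finsupp \<longleftrightarrow> finite (supp f)" by (simp add: finsupp_def supp_def)

lemma finsupp_zero[simp, intro]: "0 \<in> finsupp" by (simp add: finsupp_def fun_apply_simps)

lemma finsupp_add[intro]:
  assumes "f \<in> finsupp" "g \<in> finsupp" shows "f + g \<in> finsupp"
proof -
  have "supp (f + g) \<subseteq> supp f \<union> supp g" by (auto simp: supp_def fun_apply_simps)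
  then show ?thesis using assms by (auto simp: finsupp_iff intro: finite_subset)
qed

lemma finsupp_fsc[intro]: "f \<in> finsupp \<Longrightarrow> fsc c f \<in> finsupp"
  unfolding finsupp_def mem_Collect_eq by (rule rev_finite_subset) (auto simp: fun_apply_simps)

lemma finsupp_uminus[intro]: "f \<in> finsupp \<Longrightarrow> - f \<in> finsupp"
  unfolding finsupp_def by (simp add: fun_apply_simps)

lemma finsupp_diff[intro]: "f \<in> finsupp \<Longrightarrow> g \<in> finsupp \<Longrightarrow> f - g \<in> finsupp"
  using finsupp_add[of f "-g"] finsupp_uminus[of g] by simp

lemma finsupp_pmon[simp, intro]: "pmon x \<in> finsupp"
  unfolding finsupp_def pmon_def mem_Collect_eq by (rule rev_finite_subset[of "{x}"]) auto

lemma finsupp_wmon[simp, intro]: "wmon x \<in> finsupp" by (simp add: wmon_pmon)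

lemma finsupp_sum[intro]: "(\<And>x. x \<in> S \<Longrightarrow> g x \<in> finsupp) \<Longrightarrow> sum g S \<in> finsupp"
  by (induction S rule: infinite_finite_induct) (auto simp: fun_apply_simps)

lemma sum_fun_apply: "(\<Sum>x\<in>S. g x) u = (\<Sum>x\<in>S. g x u)"
  by (induction S rule: infinite_finite_induct) (auto simp: fun_apply_simps)

lemma finsupp_eq_sum_pmon:
  assumes "finite S" "supp f \<subseteq> S"
  shows "f = (\<Sum>x\<in>S. fsc (f x) (pmon x))"
proof
  fix u
  have "(\<Sum>x\<in>S. fsc (f x) (pmon x)) u = (\<Sum>x\<in>S. f x * pmon x u)"
    by (simp add: sum_fun_apply fsc_apply)
  also have "\<dots> = (if u \<in> S then f u else 0)"
    by (simp add: pmon_def assms(1) if_distrib cong: if_cong)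
  also have "\<dots> = f u" using assms(2) by (auto simp: supp_def)
  finally show "f u = (\<Sum>x\<in>S. fsc (f x) (pmon x)) u" by simp
qed

lemma finsupp_induct[consumes 1, case_names zero add]:
  assumes f: "f \<in> finsupp" and zero: "P 0"
    and add: "\<And>x c g. g \<in> finsupp \<Longrightarrow> P g \<Longrightarrow> P (fsc c (pmon x) + g)"
  shows "P f"
proof -
  have "P (\<Sum>x\<in>S. fsc (f x) (pmon x))" if "finite S" for S
    using that
  proof (induction S rule: finite_induct)
    case empty then show ?case using zero by (simp add: zero_fun_def)
  next
    case (insert x F)
    have "(\<Sum>x\<in>F. fsc (f x) (pmon x)) \<in> finsupp" by (auto intro!: finsupp_sum)
    then show ?case using add[of "\<Sum>x\<in>F. fsc (f x) (pmon x)" "f x" x] insert by (simp add: sum.insert)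
  qed
  moreover have "finite (supp f)" "f = (\<Sum>x\<in>supp f. fsc (f x) (pmon x))"
    using f by (auto simp: finsupp_iff intro: finsupp_eq_sum_pmon)
  ultimately show ?thesis by metis
qed

lemma flinear_zero: "flinear \<phi> \<Longrightarrow> \<phi> 0 = 0"
  unfolding flinear_def by (metis add_cancel_right_right finsupp_zero add_0)

lemma flinear_add: "flinear \<phi> \<Longrightarrow> f \<in> finsupp \<Longrightarrow> g \<in> finsupp \<Longrightarrow> \<phi> (f + g) = \<phi> f + \<phi> g"
  unfolding flinear_def by blast

lemma flinear_fsc: "flinear \<phi> \<Longrightarrow> f \<in> finsupp \<Longrightarrow> \<phi> (fsc c f) = fsc c (\<phi> f)"
  unfolding flinear_def by blast

lemma flinear_uminus: "flinear \<phi> \<Longrightarrow> f \<in> finsupp \<Longrightarrow> \<phi> (- f) = - \<phi> f"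
  using flinear_fsc[of \<phi> f "-1"] by (simp add: fsc_minus1)

lemma flinear_diff: "flinear \<phi> \<Longrightarrow> f \<in> finsupp \<Longrightarrow> g \<in> finsupp \<Longrightarrow> \<phi> (f - g) = \<phi> f - \<phi> g"
  using flinear_add[of \<phi> f "-g"] flinear_uminus[of \<phi> g] by auto

lemma flinear_comp:
  "flinear \<phi> \<Longrightarrow> flinear \<psi> \<Longrightarrow> (\<And>f. f \<in> finsupp \<Longrightarrow> \<psi> f \<in> finsupp) \<Longrightarrow> flinear (\<lambda>f. \<phi> (\<psi> f))"
  unfolding flinear_def by (simp add: finsupp_fsc)

lemma flinear_eqI:
  assumes "flinear \<phi>" "flinear \<psi>" "\<And>x. \<phi> (pmon x) = \<psi> (pmon x)" "f \<in> finsupp"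
  shows "\<phi> f = \<psi> f"
  using assms(4)
proof (induction rule: finsupp_induct)
  case zero then show ?case using assms flinear_zero[of \<phi>] flinear_zero[of \<psi>] by (simp add: zero_fun_def)
next
  case (add x c g)
  have "\<phi> (fsc c (pmon x) + g) = fsc c (\<phi> (pmon x)) + \<phi> g"
    using add(1) flinear_add[OF assms(1)] flinear_fsc[OF assms(1)] by (metis finsupp_fsc finsupp_pmon)
  moreover have "\<psi> (fsc c (pmon x) + g) = fsc c (\<psi> (pmon x)) + \<psi> g"
    using add(1) flinear_add[OF assms(2)] flinear_fsc[OF assms(2)] by (metis finsupp_fsc finsupp_pmon)
  ultimately show ?case using add(2) assms(3) by simp
qed

definition lin_ext :: "('a \<Rightarrow> complex) \<Rightarrow> ('a \<Rightarrow> 'b \<Rightarrow> complex) \<Rightarrow> 'b \<Rightarrow> complex" where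
  "lin_ext f h = (\<Sum>x\<in>supp f. fsc (f x) (h x))"

lemma lin_ext_superset: "finite S \<Longrightarrow> supp f \<subseteq> S \<Longrightarrow> lin_ext f h = (\<Sum>x\<in>S. fsc (f x) (h x))"
  unfolding lin_ext_def
  by (rule sum.mono_neutral_left) (auto simp: supp_def fun_eq_iff)

lemma flinear_lin_ext: "flinear (\<lambda>f. lin_ext f h)"
  unfolding flinear_def
proof (intro conjI ballI allI)
  fix f g :: "'a \<Rightarrow> complex" assume f: "f \<in> finsupp" and g: "g \<in> finsupp"
  let ?S = "supp f \<union> supp g"
  have fin: "finite ?S" using f g by (simp add: finsupp_iff)
  have s: "supp (f + g) \<subseteq> ?S" by (auto simp: supp_def fun_apply_simps)
  show "lin_ext (f + g) h = lin_ext f h + lin_ext g h"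
    by (simp add: lin_ext_superset[OF fin s] lin_ext_superset[OF fin] sum.distrib[symmetric] fsc_plus plus_fun_apply)
next
  fix c and f :: "'a \<Rightarrow> complex" assume f: "f \<in> finsupp"
  have fin: "finite (supp f)" using f by (simp add: finsupp_iff)
  have s: "supp (fsc c f) \<subseteq> supp f" by (auto simp: supp_def fun_apply_simps)
  show "lin_ext (fsc c f) h = fsc c (lin_ext f h)"
    using lin_ext_superset[OF fin s, of h]
    by (simp add: lin_ext_def fun_eq_iff sum_fun_apply fsc_apply sum_distrib_left mult.assoc)
qed

lemma lin_ext_pmon[simp]: "lin_ext (pmon x) h = h x"
proof -
  have "lin_ext (pmon x) h = (\<Sum>y\<in>{x}. fsc (pmon x y) (h y))"
    by (rule lin_ext_superset) (auto simp: supp_def pmon_def)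
  then show ?thesis by (simp add: pmon_def)
qed

lemma finsupp_lin_ext: "(\<And>x. h x \<in> finsupp) \<Longrightarrow> lin_ext f h \<in> finsupp"
  unfolding lin_ext_def by (auto intro!: finsupp_sum)

section \<open>The free algebra and the ideals \<open>C\<^sub>\<sigma>\<^sub>\<pi>\<close>\<close>

lemma fmul_add_left: "fmul (f + g) h = fmul f h + fmul g h"
  by (simp add: fmul_def fun_eq_iff fun_apply_simps distrib_right sum.distrib)
lemma fmul_add_right: "fmul f (g + h) = fmul f g + fmul f h"
  by (simp add: fmul_def fun_eq_iff fun_apply_simps distrib_left sum.distrib)
lemma fmul_fsc_left: "fmul (fsc c f) g = fsc c (fmul f g)"
  by (simp add: fmul_def fun_eq_iff fun_apply_simps sum_distrib_left mult.assoc)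
lemma fmul_fsc_right: "fmul f (fsc c g) = fsc c (fmul f g)"
  by (simp add: fmul_def fun_eq_iff fun_apply_simps sum_distrib_left mult.left_commute)
lemma fmul_zero_left[simp]: "fmul 0 g = 0"
  by (simp add: fmul_def fun_eq_iff fun_apply_simps)
lemma fmul_zero_right[simp]: "fmul f 0 = 0"
  by (simp add: fmul_def fun_eq_iff fun_apply_simps)
lemma fmul_diff_left: "fmul (f - g) h = fmul f h - fmul g h"
  by (simp add: fmul_def fun_eq_iff fun_apply_simps left_diff_distrib sum_subtractf)
lemma fmul_diff_right: "fmul f (g - h) = fmul f g - fmul f h"
  by (simp add: fmul_def fun_eq_iff fun_apply_simps right_diff_distrib sum_subtractf)
lemma fmul_uminus_left: "fmul (- f) h = - fmul f h"
  by (simp add: fmul_def fun_eq_iff fun_apply_simps sum_negf)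
lemma fmul_uminus_right: "fmul f (- h) = - fmul f h"
  by (simp add: fmul_def fun_eq_iff fun_apply_simps sum_negf)

lemmas fmul_lin = fmul_add_left fmul_add_right fmul_fsc_left fmul_fsc_right fmul_diff_left
  fmul_diff_right fmul_uminus_left fmul_uminus_right fmul_zero_left fmul_zero_right

lemma fmul_wmon_left_apply:
  "fmul (wmon u) g w = (if length u \<le> length w \<and> take (length u) w = u then g (drop (length u) w) else 0)"
proof -
  have "fmul (wmon u) g w = (\<Sum>k\<le>length w. if k = length u then
          (if take (length u) w = u then g (drop (length u) w) else 0) else 0)"
    unfolding fmul_def wmon_def
    by (rule sum.cong) (auto)
  also have "\<dots> = (if length u \<le> length w \<and> take (length u) w = u then g (drop (length u) w) else 0)"
    by (subst sum.delta) auto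
  finally show ?thesis .
qed

lemma fmul_wmon_right_apply:
  "fmul f (wmon v) w = (if length v \<le> length w \<and> drop (length w - length v) w = v then f (take (length w - length v) w) else 0)"
proof -
  have "fmul f (wmon v) w = (\<Sum>k\<le>length w. if k = length w - length v then
          (if length v \<le> length w \<and> drop (length w - length v) w = v then f (take (length w - length v) w) else 0) else 0)"
    unfolding fmul_def wmon_def
    by (rule sum.cong) auto
  also have "\<dots> = (if length v \<le> length w \<and> drop (length w - length v) w = v then f (take (length w - length v) w) else 0)"
    by (subst sum.delta) auto
  finally show ?thesis .
qed

lemma fmul_wmon: "fmul (wmon u) (wmon v) = wmon (u @ v)"
proof
  fix w
  show "fmul (wmon u) (wmon v) w = wmon (u @ v) w"
    unfolding fmul_wmon_left_apply
    by (auto simp: wmon_def) (metis append_take_drop_id)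
qed

lemma fmul_fone_left[simp]: "fmul fone f = f"
  by (simp add: fun_eq_iff fone_def fmul_wmon_left_apply)

lemma fmul_fone_right[simp]: "fmul f fone = f"
  by (simp add: fun_eq_iff fone_def fmul_wmon_right_apply)

lemma finsupp_fmul[intro]:
  assumes f: "f \<in> finsupp" and g: "g \<in> finsupp"
  shows "fmul f g \<in> finsupp"
proof -
  have fin: "finite ((\<lambda>(x, y). x @ y) ` (supp f \<times> supp g))"
    using f g by (simp add: finsupp_iff)
  have "supp (fmul f g) \<subseteq> (\<lambda>(x, y). x @ y) ` (supp f \<times> supp g)"
  proof
    fix w assume "w \<in> supp (fmul f g)"
    then have "(\<Sum>k\<le>length w. f (take k w) * g (drop k w)) \<noteq> 0" by (simp add: supp_def fmul_def)
    then obtain k where "f (take k w) * g (drop k w) \<noteq> 0" using sum.not_neutral_contains_not_neutral by blast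
    then have "take k w \<in> supp f" "drop k w \<in> supp g" by (auto simp: supp_def)
    then have "(take k w, drop k w) \<in> supp f \<times> supp g" by simp
    then show "w \<in> (\<lambda>(x, y). x @ y) ` (supp f \<times> supp g)"
      by (rule rev_image_eqI) simp
  qed
  then show ?thesis using fin by (simp add: finsupp_iff finite_subset)
qed

lemma flinear_fmul_left: "flinear (\<lambda>f. fmul f g)"
  by (simp add: flinear_def fmul_add_left fmul_fsc_left)
lemma flinear_fmul_right: "flinear (\<lambda>g. fmul f g)"
  by (simp add: flinear_def fmul_add_right fmul_fsc_right)

lemma fmul_assoc:
  assumes f: "f \<in> finsupp" and g: "g \<in> finsupp" and h: "h \<in> finsupp"
  shows "fmul (fmul f g) h = fmul f (fmul g h)"
proof -
  have w2: "fmul (fmul (wmon u) (wmon v)) h = fmul (wmon u) (fmul (wmon v) h)" for u v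
    by (rule flinear_eqI[OF _ _ _ h]) (auto simp: flinear_def fmul_lin wmon_pmon[symmetric] fmul_wmon)
  have w3: "fmul (fmul (wmon u) g) h = fmul (wmon u) (fmul g h)" for u
    by (rule flinear_eqI[OF _ _ _ g, where \<phi>="\<lambda>g. fmul (fmul (wmon u) g) h"])
      (auto simp: flinear_def fmul_lin wmon_pmon[symmetric] w2)
  show ?thesis
    by (rule flinear_eqI[OF _ _ _ f, where \<phi>="\<lambda>f. fmul (fmul f g) h"])
      (auto simp: flinear_def fmul_lin wmon_pmon[symmetric] w3)
qed

lemma finsupp_gens[simp, intro]: "gA \<in> finsupp" "gB \<in> finsupp" "gC \<in> finsupp" "gD \<in> finsupp" "fone \<in> finsupp"
  by (auto simp: gA_def gB_def gC_def gD_def fone_def)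

lemma lspan_uminus: "x \<in> lspan S \<Longrightarrow> - x \<in> lspan S"
  using lspan_scale[of x S "-1"] by (simp add: fsc_minus1)

lemma lspan_diff: "x \<in> lspan S \<Longrightarrow> y \<in> lspan S \<Longrightarrow> x - y \<in> lspan S"
  using lspan_add[of x S "-y"] lspan_uminus[of y S] by simp

lemma lspan_finsupp: assumes S: "S \<subseteq> finsupp" shows "lspan S \<subseteq> finsupp"
proof
  fix x assume "x \<in> lspan S"
  then show "x \<in> finsupp" by (induction rule: lspan.induct) (use S in auto)
qed

lemma lspan_empty: "lspan {} = {0}"
proof -
  have "x = 0" if "x \<in> lspan {}" for x :: "'a \<Rightarrow> complex"
    using that by (induction rule: lspan.induct) auto
  then show ?thesis using lspan_zero by blast
qed

lemma lspan_image:
  assumes S: "S \<subseteq> finsupp" and L: "flinear L" and img: "\<And>x. x \<in> S \<Longrightarrow> L x \<in> lspan T"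
    and x: "x \<in> lspan S"
  shows "L x \<in> lspan T"
proof -
  have "L x \<in> lspan T \<and> x \<in> finsupp" using x
  proof (induction rule: lspan.induct)
    case lspan_zero then show ?case using flinear_zero[OF L] lspan.lspan_zero[of T] by simp
  next
    case (lspan_base x) then show ?case using img S by auto
  next
    case (lspan_add x y) then show ?case using L by (auto simp: flinear_add intro: lspan.intros)
  next
    case (lspan_scale x c) then show ?case using L by (auto simp: flinear_fsc intro: lspan.intros)
  qed
  then show ?thesis ..
qed

definition rel_ab :: "complex \<Rightarrow> fa" where "rel_ab q = fmul gA gB - fsc q (fmul gB gA)"
definition rel_ac :: "complex \<Rightarrow> fa" where "rel_ac q = fmul gA gC - fsc q (fmul gC gA)"
definition rel_bc :: fa where "rel_bc = fmul gB gC - fmul gC gB"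
definition rel_bd :: "complex \<Rightarrow> fa" where "rel_bd q = fmul gB gD - fsc q (fmul gD gB)"
definition rel_cd :: "complex \<Rightarrow> fa" where "rel_cd q = fmul gC gD - fsc q (fmul gD gC)"
definition rel_da :: "complex \<Rightarrow> fa" where "rel_da q = fmul gD gA - fsc (inverse q) (fmul gB gC) - fone"
definition rel_ad :: "complex \<Rightarrow> fa" where "rel_ad q = fmul gA gD - fsc q (fmul gB gC) - fone"

lemmas rel_defs = rel_ab_def rel_ac_def rel_bc_def rel_bd_def rel_cd_def rel_da_def rel_ad_def

lemma slq_rels_eq: "slq_rels q = {rel_ab q, rel_ac q, rel_bc, rel_bd q, rel_cd q, rel_da q, rel_ad q}"
  by (simp add: slq_rels_def rel_defs)

lemma finsupp_rels: "r \<in> slq_rels q \<Longrightarrow> r \<in> finsupp"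
  by (auto simp: slq_rels_def intro!: finsupp_diff finsupp_fmul finsupp_fsc)

definition gen_ad :: "complex \<Rightarrow> fa" where "gen_ad \<sigma> = gA - gD + fsc \<sigma> gB"
definition gen_cb :: "complex \<Rightarrow> fa" where "gen_cb \<pi> = fsc \<pi> gB + gC"

definition rel_multiples :: "complex \<Rightarrow> fa set" where
  "rel_multiples q = {fmul (fmul x r) y | x r y. r \<in> slq_rels q \<and> x \<in> finsupp \<and> y \<in> finsupp}"
definition cgen_multiples :: "complex \<Rightarrow> complex \<Rightarrow> fa set" where
  "cgen_multiples \<sigma> \<pi> = {fmul c y | c y. c \<in> {gen_ad \<sigma>, gen_cb \<pi>} \<and> y \<in> finsupp}"
definition Jideal :: "complex \<Rightarrow> complex \<Rightarrow> complex \<Rightarrow> fa set" where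
  "Jideal q \<sigma> \<pi> = lspan (rel_multiples q \<union> cgen_multiples \<sigma> \<pi>)"

lemma Jset_eq_Jideal: "Jset q s \<mu> \<nu> = Jideal q (2 * s * complex_of_real \<mu>) (q * complex_of_real \<nu>)"
  unfolding Jset_def Jideal_def rel_multiples_def cgen_multiples_def Cgens_def gen_ad_def gen_cb_def by simp

lemma finsupp_gen_ad_cb[simp, intro]: "gen_ad \<sigma> \<in> finsupp" "gen_cb \<pi> \<in> finsupp"
  by (auto simp: gen_ad_def gen_cb_def)

lemma Jideal_gens_finsupp: "rel_multiples q \<union> cgen_multiples \<sigma> \<pi> \<subseteq> finsupp"
  by (auto simp: rel_multiples_def cgen_multiples_def intro!: finsupp_fmul dest: finsupp_rels)

lemma Jideal_finsupp: "j \<in> Jideal q \<sigma> \<pi> \<Longrightarrow> j \<in> finsupp"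
  using lspan_finsupp[OF Jideal_gens_finsupp] unfolding Jideal_def by blast

lemma Jideal_rel: "r \<in> slq_rels q \<Longrightarrow> x \<in> finsupp \<Longrightarrow> y \<in> finsupp \<Longrightarrow> fmul (fmul x r) y \<in> Jideal q \<sigma> \<pi>"
  unfolding Jideal_def rel_multiples_def by (rule lspan_base) blast

lemma rel_in_Jideal: "r \<in> slq_rels q \<Longrightarrow> r \<in> Jideal q \<sigma> \<pi>"
  using Jideal_rel[of r q fone fone] by simp

lemma rels_in_Jideal: "rel_ab q \<in> Jideal q \<sigma> \<pi>" "rel_ac q \<in> Jideal q \<sigma> \<pi>" "rel_bc \<in> Jideal q \<sigma> \<pi>"
  "rel_bd q \<in> Jideal q \<sigma> \<pi>" "rel_cd q \<in> Jideal q \<sigma> \<pi>" "rel_da q \<in> Jideal q \<sigma> \<pi>" "rel_ad q \<in> Jideal q \<sigma> \<pi>"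
  by (rule rel_in_Jideal; simp add: slq_rels_eq)+

lemma Jideal_gen_ad: "y \<in> finsupp \<Longrightarrow> fmul (gen_ad \<sigma>) y \<in> Jideal q \<sigma> \<pi>"
  unfolding Jideal_def cgen_multiples_def by (rule lspan_base) blast
lemma Jideal_gen_cb: "y \<in> finsupp \<Longrightarrow> fmul (gen_cb \<pi>) y \<in> Jideal q \<sigma> \<pi>"
  unfolding Jideal_def cgen_multiples_def by (rule lspan_base) blast

lemma Jideal_add: "x \<in> Jideal q \<sigma> \<pi> \<Longrightarrow> y \<in> Jideal q \<sigma> \<pi> \<Longrightarrow> x + y \<in> Jideal q \<sigma> \<pi>"
  unfolding Jideal_def by (rule lspan_add)
lemma Jideal_diff: "x \<in> Jideal q \<sigma> \<pi> \<Longrightarrow> y \<in> Jideal q \<sigma> \<pi> \<Longrightarrow> x - y \<in> Jideal q \<sigma> \<pi>"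
  unfolding Jideal_def by (rule lspan_diff)
lemma Jideal_fsc: "x \<in> Jideal q \<sigma> \<pi> \<Longrightarrow> fsc c x \<in> Jideal q \<sigma> \<pi>"
  unfolding Jideal_def by (rule lspan_scale)
lemma Jideal_uminus: "x \<in> Jideal q \<sigma> \<pi> \<Longrightarrow> - x \<in> Jideal q \<sigma> \<pi>"
  unfolding Jideal_def by (rule lspan_uminus)
lemma Jideal_zero: "0 \<in> Jideal q \<sigma> \<pi>"
  unfolding Jideal_def by (rule lspan_zero)

lemma Jideal_diff_trans: "x - y \<in> Jideal q \<sigma> \<pi> \<Longrightarrow> y - z \<in> Jideal q \<sigma> \<pi> \<Longrightarrow> x - z \<in> Jideal q \<sigma> \<pi>"
  using Jideal_add[of "x - y" q \<sigma> \<pi> "y - z"] by simp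

lemma Jideal_image:
  assumes L: "flinear L"
    and rel: "\<And>x r y. r \<in> slq_rels q \<Longrightarrow> x \<in> finsupp \<Longrightarrow> y \<in> finsupp \<Longrightarrow> L (fmul (fmul x r) y) \<in> lspan T"
    and ad: "\<And>y. y \<in> finsupp \<Longrightarrow> L (fmul (gen_ad \<sigma>) y) \<in> lspan T"
    and cb: "\<And>y. y \<in> finsupp \<Longrightarrow> L (fmul (gen_cb \<pi>) y) \<in> lspan T"
    and j: "j \<in> Jideal q \<sigma> \<pi>"
  shows "L j \<in> lspan T"
  using j unfolding Jideal_def
  by (rule lspan_image[OF Jideal_gens_finsupp L, rotated])
     (auto simp: rel_multiples_def cgen_multiples_def intro: rel ad cb)

lemma Jideal_mult_right:
  assumes j: "j \<in> Jideal q \<sigma> \<pi>" and y: "y \<in> finsupp"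
  shows "fmul j y \<in> Jideal q \<sigma> \<pi>"
  unfolding Jideal_def
proof (rule Jideal_image[OF flinear_fmul_left _ _ _ j])
  fix x r z :: fa assume "r \<in> slq_rels q" "x \<in> finsupp" "z \<in> finsupp"
  then show "fmul (fmul (fmul x r) z) y \<in> lspan (rel_multiples q \<union> cgen_multiples \<sigma> \<pi>)"
    using Jideal_rel[of r q x "fmul z y" \<sigma> \<pi>] y
    by (simp add: fmul_assoc finsupp_rels finsupp_fmul Jideal_def)
next
  fix z :: fa assume "z \<in> finsupp"
  then show "fmul (fmul (gen_ad \<sigma>) z) y \<in> lspan (rel_multiples q \<union> cgen_multiples \<sigma> \<pi>)"
    and "fmul (fmul (gen_cb \<pi>) z) y \<in> lspan (rel_multiples q \<union> cgen_multiples \<sigma> \<pi>)"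
    using Jideal_gen_ad[of "fmul z y" \<sigma> q \<pi>] Jideal_gen_cb[of "fmul z y" \<pi> q \<sigma>] y
    by (simp_all add: fmul_assoc finsupp_fmul Jideal_def)
qed

lemma Jideal_mult_left:
  assumes x: "x \<in> finsupp"
    and ad: "fmul x (gen_ad \<sigma>) \<in> Jideal q \<sigma>' \<pi>'" and cb: "fmul x (gen_cb \<pi>) \<in> Jideal q \<sigma>' \<pi>'"
    and j: "j \<in> Jideal q \<sigma> \<pi>"
  shows "fmul x j \<in> Jideal q \<sigma>' \<pi>'"
  using Jideal_image[OF flinear_fmul_right[of x] _ _ _ j, where T = "rel_multiples q \<union> cgen_multiples \<sigma>' \<pi>'"] x
  unfolding Jideal_def[symmetric]
  by (simp add: fmul_assoc[symmetric] finsupp_rels finsupp_fmul Jideal_rel Jideal_mult_right ad cb)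

section \<open>The comultiplication and the counit\<close>

type_synonym tfa = "gen list \<times> gen list \<Rightarrow> complex"

definition tmul :: "tfa \<Rightarrow> tfa \<Rightarrow> tfa" where
  "tmul H K = (\<lambda>(u, v). \<Sum>k\<le>length u. \<Sum>l\<le>length v. H (take k u, take l v) * K (drop k u, drop l v))"

lemma tmul_apply: "tmul H K (u, v) = (\<Sum>k\<le>length u. \<Sum>l\<le>length v. H (take k u, take l v) * K (drop k u, drop l v))"
  by (simp add: tmul_def)

lemma tmul_add_left: "tmul (H + H') K = tmul H K + tmul H' K"
  by (simp add: tmul_def fun_eq_iff fun_apply_simps distrib_right sum.distrib)
lemma tmul_add_right: "tmul H (K + K') = tmul H K + tmul H K'"
  by (simp add: tmul_def fun_eq_iff fun_apply_simps distrib_left sum.distrib)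
lemma tmul_fsc_left: "tmul (fsc c H) K = fsc c (tmul H K)"
  by (simp add: tmul_def fun_eq_iff fun_apply_simps sum_distrib_left mult.assoc)
lemma tmul_fsc_right: "tmul H (fsc c K) = fsc c (tmul H K)"
  by (simp add: tmul_def fun_eq_iff fun_apply_simps sum_distrib_left mult.left_commute)
lemma tmul_diff_left: "tmul (H - H') K = tmul H K - tmul H' K"
  by (simp add: tmul_def fun_eq_iff fun_apply_simps left_diff_distrib sum_subtractf)
lemma tens_apply: "tens x y (u, v) = x u * y v" by (simp add: tens_def)

lemma tmul_tens: "tmul (tens x y) (tens x' y') = tens (fmul x x') (fmul y y')"
proof -
  have "tmul (tens x y) (tens x' y') (u, v) = tens (fmul x x') (fmul y y') (u, v)" for u v
    by (simp add: tmul_apply tens_apply fmul_def sum_product mult_ac)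
  then show ?thesis by (auto simp: fun_eq_iff)
qed

lemma tens_add_left: "tens (x + x') y = tens x y + tens x' y"
  by (simp add: tens_def fun_eq_iff fun_apply_simps distrib_right)
lemma tens_add_right: "tens x (y + y') = tens x y + tens x y'"
  by (simp add: tens_def fun_eq_iff fun_apply_simps distrib_left)
lemma tens_diff_left: "tens (x - x') y = tens x y - tens x' y"
  by (simp add: tens_def fun_eq_iff fun_apply_simps left_diff_distrib)
lemma tens_diff_right: "tens x (y - y') = tens x y - tens x y'"
  by (simp add: tens_def fun_eq_iff fun_apply_simps right_diff_distrib)
lemma tens_fsc_left: "tens (fsc c x) y = fsc c (tens x y)"
  by (simp add: tens_def fun_eq_iff fun_apply_simps)
lemma tens_fsc_right: "tens x (fsc c y) = fsc c (tens x y)"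
  by (simp add: tens_def fun_eq_iff fun_apply_simps)
lemma tens_pmon: "tens (pmon u) (pmon v) = pmon (u, v)"
  by (simp add: tens_def fun_eq_iff pmon_def)

lemmas tens_lin = tens_add_left tens_add_right tens_diff_left tens_diff_right tens_fsc_left tens_fsc_right

lemma finsupp_tens[intro]: assumes "x \<in> finsupp" "y \<in> finsupp" shows "tens x y \<in> finsupp"
proof -
  have "supp (tens x y) \<subseteq> supp x \<times> supp y" by (auto simp: supp_def tens_def)
  then show ?thesis using assms by (auto simp: finsupp_iff intro: finite_subset)
qed

lemma finsupp_tmul[intro]:
  assumes H: "H \<in> finsupp" and K: "K \<in> finsupp"
  shows "tmul H K \<in> finsupp"
proof -
  let ?m = "\<lambda>((a, b), (c, d)). (a @ c, b @ d)"
  have fin: "finite (?m ` (supp H \<times> supp K))" using H K by (simp add: finsupp_iff)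
  have "supp (tmul H K) \<subseteq> ?m ` (supp H \<times> supp K)"
  proof
    fix p assume "p \<in> supp (tmul H K)"
    then obtain u v where p: "p = (u, v)" and "tmul H K (u, v) \<noteq> 0" by (cases p) (auto simp: supp_def)
    then obtain k where "(\<Sum>l\<le>length v. H (take k u, take l v) * K (drop k u, drop l v)) \<noteq> 0"
      unfolding tmul_apply using sum.not_neutral_contains_not_neutral by blast
    then obtain l where "H (take k u, take l v) * K (drop k u, drop l v) \<noteq> 0"
      using sum.not_neutral_contains_not_neutral by blast
    then have "((take k u, take l v), (drop k u, drop l v)) \<in> supp H \<times> supp K" by (auto simp: supp_def)
    then show "p \<in> ?m ` (supp H \<times> supp K)" unfolding p by (rule rev_image_eqI) simp
  qed
  then show ?thesis using fin by (simp add: finsupp_iff finite_subset)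
qed

definition composable :: "gen list \<Rightarrow> gen list \<Rightarrow> bool" where
  "composable u v \<longleftrightarrow> length u = length v \<and> (\<forall>i<length u. gcol (u ! i) = grow (v ! i))"
definition merge_word :: "gen list \<Rightarrow> gen list \<Rightarrow> gen list" where
  "merge_word u v = map2 (\<lambda>x y. gent (grow x) (gcol y)) u v"

lemma fcomult_apply: "fcomult f (u, v) = (if composable u v then f (merge_word u v) else 0)"
  by (auto simp: fcomult_def composable_def merge_word_def)

lemma composable_split:
  assumes k: "k \<le> length u" and l: "l \<le> length v"
  shows "(composable (take k u) (take l v) \<and> composable (drop k u) (drop l v)) \<longleftrightarrow> (composable u v \<and> k = l)"
proof
  assume a: "composable (take k u) (take l v) \<and> composable (drop k u) (drop l v)"
  then have kl: "k = l" and len: "length u = length v"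
    using k l by (auto simp: composable_def)
  have "gcol (u ! i) = grow (v ! i)" if i: "i < length u" for i
  proof (cases "i < k")
    case True
    then show ?thesis using a kl i by (auto simp: composable_def)
  next
    case False
    then have "i - k < length (drop k u)" using i by simp
    then have "gcol (drop k u ! (i - k)) = grow (drop l v ! (i - k))" using a by (auto simp: composable_def)
    then show ?thesis using False kl k l by (simp add: nth_drop)
  qed
  then show "composable u v \<and> k = l" using kl len by (simp add: composable_def)
next
  assume "composable u v \<and> k = l"
  then show "composable (take k u) (take l v) \<and> composable (drop k u) (drop l v)"
    using k l by (auto simp: composable_def)
qed

lemma composable_length: "composable u v \<Longrightarrow> length u = length v" by (simp add: composable_def)

lemma merge_word_take: "merge_word (take k u) (take k v) = take k (merge_word u v)"
  by (simp add: merge_word_def take_map take_zip)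
lemma merge_word_drop: "merge_word (drop k u) (drop k v) = drop k (merge_word u v)"
  by (simp add: merge_word_def drop_map drop_zip)
lemma length_merge_word: "composable u v \<Longrightarrow> length (merge_word u v) = length u"
  by (simp add: merge_word_def composable_def)

lemma fcomult_fmul: "fcomult (fmul f g) = tmul (fcomult f) (fcomult g)"
proof -
  have "fcomult (fmul f g) (u, v) = tmul (fcomult f) (fcomult g) (u, v)" for u v
  proof -
    have "tmul (fcomult f) (fcomult g) (u, v) =
      (\<Sum>k\<le>length u. \<Sum>l\<le>length v. if l = k then (if composable u v then f (take k (merge_word u v)) * g (drop k (merge_word u v)) else 0) else 0)"
      unfolding tmul_apply fcomult_apply
    proof (intro sum.cong refl)
      fix k l assume k: "k \<in> {..length u}" and l: "l \<in> {..length v}"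
      show "(if composable (take k u) (take l v) then f (merge_word (take k u) (take l v)) else 0) *
            (if composable (drop k u) (drop l v) then g (merge_word (drop k u) (drop l v)) else 0) =
            (if l = k then if composable u v then f (take k (merge_word u v)) * g (drop k (merge_word u v)) else 0 else 0)"
        using composable_split[of k u l v] k l by (auto simp: merge_word_take merge_word_drop)
    qed
    also have "\<dots> = (\<Sum>k\<le>length u. if k \<le> length v then (if composable u v then f (take k (merge_word u v)) * g (drop k (merge_word u v)) else 0) else 0)"
      by (intro sum.cong refl) (simp add: sum.delta)
    also have "\<dots> = (if composable u v then (\<Sum>k\<le>length u. f (take k (merge_word u v)) * g (drop k (merge_word u v))) else 0)"
    proof (cases "composable u v")
      case True
      then have "length u = length v" by (rule composable_length)
      then show ?thesis using True by (auto intro!: sum.cong)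
    next
      case False
      then show ?thesis by (simp add: sum.neutral)
    qed
    also have "\<dots> = fcomult (fmul f g) (u, v)"
      by (simp add: fcomult_apply fmul_def length_merge_word)
    finally show ?thesis by simp
  qed
  then show ?thesis by (auto simp: fun_eq_iff)
qed

lemma fcomult_add: "fcomult (f + g) = fcomult f + fcomult g"
  by (auto simp: fun_eq_iff fcomult_apply fun_apply_simps)
lemma fcomult_diff: "fcomult (f - g) = fcomult f - fcomult g"
  by (auto simp: fun_eq_iff fcomult_apply fun_apply_simps)
lemma fcomult_fsc: "fcomult (fsc c f) = fsc c (fcomult f)"
  by (auto simp: fun_eq_iff fcomult_apply fun_apply_simps)
lemma flinear_fcomult: "flinear fcomult"
  by (simp add: flinear_def fcomult_add fcomult_fsc)

lemma finsupp_fcomult[intro]: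
  assumes f: "f \<in> finsupp" shows "fcomult f \<in> finsupp"
proof -
  have "supp (fcomult f) \<subseteq> (\<Union>w\<in>supp f. {p. composable (fst p) (snd p) \<and> merge_word (fst p) (snd p) = w})"
    by (auto simp: supp_def fcomult_apply split: if_splits)
  moreover have "finite {p. composable (fst p) (snd p) \<and> merge_word (fst p) (snd p) = w}" for w
  proof -
    have "{p. composable (fst p) (snd p) \<and> merge_word (fst p) (snd p) = w} \<subseteq>
          {u. length u = length w} \<times> {v. length v = length w}"
      by (auto simp: composable_def merge_word_def)
    moreover have "finite {u :: gen list. length u = length w}"
    proof -
      have "finite (UNIV :: gen set)"
      proof -
        have "(UNIV :: gen set) = {GA, GB, GC, GD}" by (auto intro: gen.exhaust)
        then show ?thesis by (metis finite.emptyI finite.insertI)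
      qed
      then show ?thesis using finite_lists_length_eq[of "UNIV :: gen set" "length w"] by simp
    qed
    ultimately show ?thesis by (auto intro: finite_subset)
  qed
  ultimately show ?thesis using f by (auto simp: finsupp_iff intro: finite_subset)
qed

lemma fcomult_letter:
  "fcomult (wmon [g]) = (\<Sum>k\<in>{1::nat, 2}. tens (wmon [gent (grow g) k]) (wmon [gent k (gcol g)]))"
proof -
  have "fcomult (wmon [g]) (u, v) = (\<Sum>k\<in>{1::nat, 2}. tens (wmon [gent (grow g) k]) (wmon [gent k (gcol g)])) (u, v)" for u v
  proof (cases "length u = 1 \<and> length v = 1")
    case True
    then obtain x y where "u = [x]" "v = [y]"
      by (metis One_nat_def length_0_conv length_Suc_conv)
    then show ?thesis
      by (cases x; cases y; cases g) (auto simp: sum_fun_apply tens_apply wmon_def fcomult_apply composable_def merge_word_def gent_def fun_apply_simps)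
  next
    case False
    then have "(\<Sum>k\<in>{1::nat, 2}. tens (wmon [gent (grow g) k]) (wmon [gent k (gcol g)])) (u, v) = 0"
      by (auto simp: sum_fun_apply tens_apply wmon_def fun_apply_simps)
    moreover have "fcomult (wmon [g]) (u, v) = 0"
    proof (cases "composable u v")
      case True
      then have "length (merge_word u v) \<noteq> 1" using False by (auto simp: length_merge_word dest: composable_length)
      then show ?thesis by (auto simp: fcomult_apply wmon_def)
    qed (simp add: fcomult_apply)
    ultimately show ?thesis by simp
  qed
  then show ?thesis by (auto simp: fun_eq_iff)
qed

lemma fcomult_gB: "fcomult gB = tens gA gB + tens gB gD"
  by (simp add: gB_def gA_def gD_def fcomult_letter gent_def)
lemma fcomult_gD: "fcomult gD = tens gC gB + tens gD gD"
  by (simp add: gC_def gB_def gD_def fcomult_letter gent_def add.commute)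

lemma tmap_eq_lin_ext: "tmap \<phi> \<psi> h = lin_ext h (\<lambda>p. tens (\<phi> (wmon (fst p))) (\<psi> (wmon (snd p))))"
proof -
  have "tmap \<phi> \<psi> h (m, n) = lin_ext h (\<lambda>p. tens (\<phi> (wmon (fst p))) (\<psi> (wmon (snd p)))) (m, n)" for m n
    by (simp add: tmap_def lin_ext_def sum_fun_apply fsc_apply tens_apply supp_def mult.assoc)
  then show ?thesis by (auto simp: fun_eq_iff)
qed

lemma flinear_tmap: "flinear (tmap \<phi> \<psi>)"
  unfolding tmap_eq_lin_ext[abs_def] by (rule flinear_lin_ext)

lemma tmap_pmon: "tmap \<phi> \<psi> (pmon (u, v)) = tens (\<phi> (wmon u)) (\<psi> (wmon v))"
  by (simp add: tmap_eq_lin_ext)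

lemma finsupp_tmap[intro]:
  "(\<And>w. \<phi> (wmon w) \<in> finsupp) \<Longrightarrow> (\<And>w. \<psi> (wmon w) \<in> finsupp) \<Longrightarrow> tmap \<phi> \<psi> h \<in> finsupp"
  unfolding tmap_eq_lin_ext by (rule finsupp_lin_ext) auto

lemma flinear_tens_left: "y \<in> finsupp \<Longrightarrow> flinear (\<lambda>x. tens x y)"
  by (simp add: flinear_def tens_lin)
lemma flinear_tens_right: "flinear (\<lambda>y. tens x y)"
  by (simp add: flinear_def tens_lin)

lemma tmap_tens:
  assumes \<phi>: "flinear \<phi>" and \<psi>: "flinear \<psi>" and x: "x \<in> finsupp" and y: "y \<in> finsupp"
  shows "tmap \<phi> \<psi> (tens x y) = tens (\<phi> x) (\<psi> y)"
proof -
  have pmon_left: "tmap \<phi> \<psi> (tens (pmon u) y) = tens (\<phi> (pmon u)) (\<psi> y)" for u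
  proof (rule flinear_eqI[OF _ _ _ y, where \<phi>="\<lambda>y. tmap \<phi> \<psi> (tens (pmon u) y)"])
    show "flinear (\<lambda>y. tmap \<phi> \<psi> (tens (pmon u) y))"
      by (rule flinear_comp[OF flinear_tmap flinear_tens_right]) auto
    show "flinear (\<lambda>a. tens (\<phi> (pmon u)) (\<psi> a))"
      using \<psi> unfolding flinear_def by (simp add: tens_lin)
    show "tmap \<phi> \<psi> (tens (pmon u) (pmon v)) = tens (\<phi> (pmon u)) (\<psi> (pmon v))" for v
      by (simp add: tens_pmon tmap_pmon wmon_pmon)
  qed
  show ?thesis
  proof (rule flinear_eqI[OF _ _ _ x, where \<phi>="\<lambda>x. tmap \<phi> \<psi> (tens x y)"])
    show "flinear (\<lambda>x. tmap \<phi> \<psi> (tens x y))"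
      by (rule flinear_comp[OF flinear_tmap flinear_tens_left[OF y]]) (use y in auto)
    show "flinear (\<lambda>a. tens (\<phi> a) (\<psi> y))"
      using \<phi> unfolding flinear_def by (simp add: tens_lin)
  qed (rule pmon_left)
qed

lemma flinear_tmul_right: "flinear (tmul H)"
  by (simp add: flinear_def tmul_add_right tmul_fsc_right)
lemma flinear_tmul_left: "flinear (\<lambda>H. tmul H K)"
  by (simp add: flinear_def tmul_add_left tmul_fsc_left)
lemma tmul_zero_right[simp]: "tmul H 0 = 0"
  by (simp add: tmul_def fun_eq_iff fun_apply_simps)

lemma tmap_fmul:
  assumes z: "z \<in> finsupp" and h: "h \<in> finsupp"
  shows "tmap (fmul z) (fmul z) h = tmul (tens z z) h"
proof (rule flinear_eqI[OF flinear_tmap flinear_tmul_right _ h])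
  fix p show "tmap (fmul z) (fmul z) (pmon p) = tmul (tens z z) (pmon p)"
    by (cases p) (simp only: tmap_pmon, simp add: tens_pmon[symmetric] tmul_tens wmon_pmon)
qed

lemma tmap_comp:
  assumes F: "flinear F" and G: "flinear G" and Ff: "\<And>f. f \<in> finsupp \<Longrightarrow> F f \<in> finsupp"
    and h: "h \<in> finsupp"
  shows "tmap G G (tmap F F h) = tmap (\<lambda>f. G (F f)) (\<lambda>f. G (F f)) h"
proof (rule flinear_eqI[OF _ flinear_tmap _ h, where \<phi>="\<lambda>h. tmap G G (tmap F F h)"])
  show "flinear (\<lambda>h. tmap G G (tmap F F h))"
    by (rule flinear_comp[OF flinear_tmap flinear_tmap]) (auto intro!: finsupp_tmap Ff)
  fix p show "tmap G G (tmap F F (pmon p)) = tmap (\<lambda>f. G (F f)) (\<lambda>f. G (F f)) (pmon p)"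
    by (cases p) (simp add: tmap_pmon tmap_tens[OF G G] Ff)
qed

lemma tsub_gens_finsupp: "J \<subseteq> finsupp \<Longrightarrow>
   {tens x y | x y. x \<in> J \<and> y \<in> finsupp} \<union> {tens x y | x y. x \<in> finsupp \<and> y \<in> J} \<subseteq> finsupp"
  by auto

lemma tsub_add: "H \<in> tsub J \<Longrightarrow> K \<in> tsub J \<Longrightarrow> H + K \<in> tsub J"
  unfolding tsub_def by (rule lspan_add)
lemma tsub_uminus: "H \<in> tsub J \<Longrightarrow> - H \<in> tsub J"
  unfolding tsub_def by (rule lspan_uminus)
lemma tsub_fsc: "H \<in> tsub J \<Longrightarrow> fsc c H \<in> tsub J"
  unfolding tsub_def by (rule lspan_scale)
lemma tsub_zero: "0 \<in> tsub J"
  unfolding tsub_def by (rule lspan_zero)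
lemma tsub_left: "x \<in> J \<Longrightarrow> y \<in> finsupp \<Longrightarrow> tens x y \<in> tsub J"
  unfolding tsub_def by (rule lspan_base) blast
lemma tsub_right: "x \<in> finsupp \<Longrightarrow> y \<in> J \<Longrightarrow> tens x y \<in> tsub J"
  unfolding tsub_def by (rule lspan_base) blast

lemma tsub_tmul:
  assumes JF: "J \<subseteq> finsupp" and Jr: "\<And>j y. j \<in> J \<Longrightarrow> y \<in> finsupp \<Longrightarrow> fmul j y \<in> J"
    and H: "H \<in> tsub J" and K: "K \<in> finsupp"
  shows "tmul H K \<in> tsub J"
proof -
  have gen: "tmul (tens x y) K \<in> tsub J" if xy: "(x \<in> J \<and> y \<in> finsupp) \<or> (x \<in> finsupp \<and> y \<in> J)" for x y
    using K
  proof (induction rule: finsupp_induct)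
    case zero then show ?case by (simp add: tsub_zero)
  next
    case (add p c g)
    obtain u v where p: "p = (u, v)" by (cases p)
    have "tmul (tens x y) (fsc c (pmon p) + g) = fsc c (tens (fmul x (wmon u)) (fmul y (wmon v))) + tmul (tens x y) g"
      by (simp add: p tmul_add_right tmul_fsc_right tens_pmon[symmetric] tmul_tens wmon_pmon)
    moreover have "tens (fmul x (wmon u)) (fmul y (wmon v)) \<in> tsub J"
      using xy
    proof
      assume "x \<in> J \<and> y \<in> finsupp"
      then show ?thesis using JF by (intro tsub_left Jr finsupp_fmul) auto
    next
      assume "x \<in> finsupp \<and> y \<in> J"
      then show ?thesis using JF by (intro tsub_right Jr finsupp_fmul) auto
    qed
    ultimately show ?case using add by (simp add: tsub_add tsub_fsc)
  qed
  have "(\<lambda>H. tmul H K) H \<in> tsub J"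
    unfolding tsub_def
    by (rule lspan_image[OF tsub_gens_finsupp[OF JF] flinear_tmul_left _ H[unfolded tsub_def]])
       (use gen in \<open>auto simp: tsub_def\<close>)
  then show ?thesis by simp
qed

lemma tmap_tsub:
  assumes G: "flinear G" and Gf: "\<And>f. f \<in> finsupp \<Longrightarrow> G f \<in> finsupp"
    and JF: "J \<subseteq> finsupp" and GJ: "\<And>j. j \<in> J \<Longrightarrow> G j \<in> J'"
    and H: "H \<in> tsub J"
  shows "tmap G G H \<in> tsub J'"
  unfolding tsub_def
proof (rule lspan_image[OF tsub_gens_finsupp[OF JF] flinear_tmap _ H[unfolded tsub_def]])
  fix z assume "z \<in> {tens x y |x y. x \<in> J \<and> y \<in> finsupp} \<union> {tens x y |x y. x \<in> finsupp \<and> y \<in> J}"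
  then obtain x y where z: "z = tens x y" and xy: "(x \<in> J \<and> y \<in> finsupp) \<or> (x \<in> finsupp \<and> y \<in> J)" by blast
  have "tmap G G z = tens (G x) (G y)" using xy JF by (auto simp: z intro!: tmap_tens G)
  moreover have "tens (G x) (G y) \<in> lspan ({tens x y |x y. x \<in> J' \<and> y \<in> finsupp} \<union> {tens x y |x y. x \<in> finsupp \<and> y \<in> J'})"
    using xy
  proof
    assume "x \<in> J \<and> y \<in> finsupp"
    then show ?thesis by (intro lspan_base) (blast intro: GJ Gf)
  next
    assume "x \<in> finsupp \<and> y \<in> J"
    then show ?thesis by (intro lspan_base) (blast intro: GJ Gf)
  qed
  ultimately show "tmap G G z \<in> lspan ({tens x y |x y. x \<in> J' \<and> y \<in> finsupp} \<union> {tens x y |x y. x \<in> finsupp \<and> y \<in> J'})"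
    by simp
qed

definition wsum :: "('a \<Rightarrow> complex) \<Rightarrow> ('a \<Rightarrow> complex) \<Rightarrow> complex" where
  "wsum \<omega> f = (\<Sum>x\<in>supp f. f x * \<omega> x)"

lemma wsum_superset: "finite S \<Longrightarrow> supp f \<subseteq> S \<Longrightarrow> wsum \<omega> f = (\<Sum>x\<in>S. f x * \<omega> x)"
  unfolding wsum_def by (rule sum.mono_neutral_left) (auto simp: supp_def)

lemma wsum_add: "f \<in> finsupp \<Longrightarrow> g \<in> finsupp \<Longrightarrow> wsum \<omega> (f + g) = wsum \<omega> f + wsum \<omega> g"
proof -
  assume "f \<in> finsupp" "g \<in> finsupp"
  then have fin: "finite (supp f \<union> supp g)" by (simp add: finsupp_iff)
  have "supp (f + g) \<subseteq> supp f \<union> supp g" by (auto simp: supp_def fun_apply_simps)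
  then show ?thesis
    by (simp add: wsum_superset[OF fin] fun_apply_simps sum.distrib distrib_right)
qed

lemma wsum_fsc: "f \<in> finsupp \<Longrightarrow> wsum \<omega> (fsc c f) = c * wsum \<omega> f"
proof -
  assume "f \<in> finsupp"
  then have fin: "finite (supp f)" by (simp add: finsupp_iff)
  have "supp (fsc c f) \<subseteq> supp f" by (auto simp: supp_def fsc_apply)
  then show ?thesis
    by (simp add: wsum_superset[OF fin] fsc_apply sum_distrib_left mult.assoc)
qed

lemma wsum_pmon: "wsum \<omega> (pmon x) = \<omega> x"
  by (subst wsum_superset[of "{x}"]) (auto simp: supp_def pmon_def)

lemma wsum_zero[simp]: "wsum \<omega> 0 = 0" by (simp add: wsum_def supp_def fun_apply_simps)

lemma feps_eq_wsum: "feps = wsum weps"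
  by (simp add: fun_eq_iff feps_def wsum_def supp_def)

lemma feps_add: "f \<in> finsupp \<Longrightarrow> g \<in> finsupp \<Longrightarrow> feps (f + g) = feps f + feps g"
  by (simp add: feps_eq_wsum wsum_add)

lemma feps_fsc: "f \<in> finsupp \<Longrightarrow> feps (fsc c f) = c * feps f"
  by (simp add: feps_eq_wsum wsum_fsc)

lemma feps_zero[simp]: "feps 0 = 0" by (simp add: feps_eq_wsum)

lemma leps_eq_wsum: "leps = wsum (\<lambda>_. 1)"
  by (simp add: fun_eq_iff leps_def wsum_def supp_def)

lemma leps_add: "f \<in> finsupp \<Longrightarrow> g \<in> finsupp \<Longrightarrow> leps (f + g) = leps f + leps g"
  by (simp add: leps_eq_wsum wsum_add)

lemma leps_fsc: "f \<in> finsupp \<Longrightarrow> leps (fsc c f) = c * leps f"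
  by (simp add: leps_eq_wsum wsum_fsc)

lemma leps_pmon: "leps (pmon n) = 1"
  by (simp add: leps_eq_wsum wsum_pmon)

lemma leps_zero: "leps 0 = 0" by (simp add: leps_eq_wsum)

lemma lcomult_add: "lcomult (f + g) = lcomult f + lcomult g"
  by (auto simp: lcomult_def fun_eq_iff fun_apply_simps)

lemma lcomult_fsc: "lcomult (fsc c f) = fsc c (lcomult f)"
  by (auto simp: lcomult_def fun_eq_iff fun_apply_simps)

lemma feps_wmon: "feps (wmon w) = weps w"
  by (simp add: feps_eq_wsum wmon_pmon wsum_pmon)

lemma weps_append: "weps (u @ v) = weps u * weps v"
  by (auto simp: weps_def)

lemma feps_fmul:
  assumes f: "f \<in> finsupp" and g: "g \<in> finsupp"
  shows "feps (fmul f g) = feps f * feps g"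
proof -
  have w: "feps (fmul (wmon u) g) = weps u * feps g" for u
    using g
  proof (induction rule: finsupp_induct)
    case zero then show ?case by simp
  next
    case (add x c h)
    then show ?case
      by (simp add: fmul_add_right fmul_fsc_right feps_add feps_fsc finsupp_fmul wmon_pmon[symmetric]
          fmul_wmon feps_wmon weps_append finsupp_fsc algebra_simps)
  qed
  show ?thesis using f
  proof (induction rule: finsupp_induct)
    case zero then show ?case by simp
  next
    case (add x c h)
    then show ?case using g
      by (simp add: fmul_add_left fmul_fsc_left feps_add feps_fsc finsupp_fmul wmon_pmon[symmetric]
          w feps_wmon finsupp_fsc algebra_simps)
  qed
qed

lemma feps_fone: "feps fone = 1"
  by (simp add: fone_def feps_wmon weps_def)

lemma fcomult_fone: "fcomult fone = tens fone fone"
proof -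
  have "fcomult fone (u, v) = tens fone fone (u, v)" for u v
  proof (cases "composable u v")
    case True
    then have "length u = length v" by (rule composable_length)
    then show ?thesis using True by (auto simp: fcomult_apply fone_def wmon_def tens_apply length_merge_word merge_word_def
        dest: arg_cong[where f=length])
  next
    case False
    then have "\<not> (u = [] \<and> v = [])" by (auto simp: composable_def)
    then show ?thesis using False by (auto simp: fcomult_apply fone_def wmon_def tens_apply)
  qed
  then show ?thesis by (auto simp: fun_eq_iff)
qed

section \<open>Isomorphisms given by left multiplication\<close>

lemma left_mult_comult_defect:
  assumes x: "x \<in> finsupp" and grouplike: "fcomult x - tens x x \<in> tsub (Jideal q \<sigma> \<pi>)" and f: "f \<in> finsupp"
  shows "tmap (fmul x) (fmul x) (fcomult f) - fcomult (fmul x f) \<in> tsub (Jideal q \<sigma> \<pi>)"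
proof -
  have "tmap (fmul x) (fmul x) (fcomult f) - fcomult (fmul x f) = - tmul (fcomult x - tens x x) (fcomult f)"
    using x f by (simp add: tmap_fmul fcomult_fmul tmul_diff_left finsupp_fcomult)
  moreover have "tmul (fcomult x - tens x x) (fcomult f) \<in> tsub (Jideal q \<sigma> \<pi>)"
    using Jideal_finsupp by (intro tsub_tmul[OF _ Jideal_mult_right grouplike finsupp_fcomult[OF f]]) blast
  ultimately show ?thesis by (simp add: tsub_uminus)
qed

lemma coalg_iso_mapD:
  assumes "coalg_iso_map J J' F"
  shows "flinear F" and "\<And>f. f \<in> finsupp \<Longrightarrow> F f \<in> finsupp"
    and "\<And>f. f \<in> finsupp \<Longrightarrow> F f \<in> J' \<longleftrightarrow> f \<in> J"
    and "\<And>g. g \<in> finsupp \<Longrightarrow> \<exists>f\<in>finsupp. g - F f \<in> J'"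
    and "\<And>f. f \<in> finsupp \<Longrightarrow> tmap F F (fcomult f) - fcomult (F f) \<in> tsub J'"
    and "\<And>f. f \<in> finsupp \<Longrightarrow> feps (F f) = feps f"
  using assms unfolding coalg_iso_map_def by blast+

lemma left_mult_iso:
  assumes x: "x \<in> finsupp" and x': "x' \<in> finsupp"
    and xJ: "\<And>j. j \<in> Jideal q \<sigma> \<pi> \<Longrightarrow> fmul x j \<in> Jideal q \<sigma>' \<pi>'"
    and x'J: "\<And>j. j \<in> Jideal q \<sigma>' \<pi>' \<Longrightarrow> fmul x' j \<in> Jideal q \<sigma> \<pi>"
    and inv1: "fmul x' x - fone \<in> Jideal q \<sigma> \<pi>"
    and inv2: "fmul x x' - fone \<in> Jideal q \<sigma>' \<pi>'"
    and gl: "fcomult x - tens x x \<in> tsub (Jideal q \<sigma>' \<pi>')"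
    and eps: "feps x = 1"
  shows "coalg_iso_map (Jideal q \<sigma> \<pi>) (Jideal q \<sigma>' \<pi>') (fmul x) \<and> rmod_map (Jideal q \<sigma>' \<pi>') (fmul x)"
proof -
  let ?J = "Jideal q \<sigma> \<pi>" and ?J' = "Jideal q \<sigma>' \<pi>'"
  have iff: "fmul x f \<in> ?J' \<longleftrightarrow> f \<in> ?J" if f: "f \<in> finsupp" for f
  proof
    assume h: "fmul x f \<in> ?J'"
    have a: "fmul x' (fmul x f) \<in> ?J" using x'J[OF h] .
    have b: "fmul (fmul x' x - fone) f \<in> ?J" using Jideal_mult_right[OF inv1 f] .
    have "fmul (fmul x' x - fone) f = fmul x' (fmul x f) - f"
      using x x' f by (simp add: fmul_diff_left fmul_assoc)
    then have "f = fmul x' (fmul x f) - fmul (fmul x' x - fone) f" by simp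
    then show "f \<in> ?J" using Jideal_diff[OF a b] by simp
  next
    assume "f \<in> ?J" then show "fmul x f \<in> ?J'" by (rule xJ)
  qed
  have surj: "\<exists>f\<in>finsupp. g - fmul x f \<in> ?J'" if g: "g \<in> finsupp" for g
  proof (intro bexI)
    have "g - fmul x (fmul x' g) = - fmul (fmul x x' - fone) g"
      using x x' g by (simp add: fmul_diff_left fmul_assoc)
    then show "g - fmul x (fmul x' g) \<in> ?J'" using Jideal_uminus[OF Jideal_mult_right[OF inv2 g]] by simp
    show "fmul x' g \<in> finsupp" using x' g by auto
  qed
  have del: "tmap (fmul x) (fmul x) (fcomult f) - fcomult (fmul x f) \<in> tsub ?J'" if "f \<in> finsupp" for f
    using that by (rule left_mult_comult_defect[OF x gl])
  have ep: "feps (fmul x f) = feps f" if f: "f \<in> finsupp" for f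
    using feps_fmul[OF x f] eps by simp
  have rm: "rmod_map ?J' (fmul x)"
    unfolding rmod_map_def using x by (simp add: fmul_assoc Jideal_zero)
  show ?thesis
    unfolding coalg_iso_map_def using iff surj del ep rm flinear_fmul_right x
    by (auto intro: finsupp_fmul)
qed

lemma coalg_iso_map_comp:
  assumes F: "coalg_iso_map (Jideal q \<sigma>1 \<pi>1) (Jideal q \<sigma>2 \<pi>2) F"
    and G: "coalg_iso_map (Jideal q \<sigma>2 \<pi>2) (Jideal q \<sigma>3 \<pi>3) G"
  shows "coalg_iso_map (Jideal q \<sigma>1 \<pi>1) (Jideal q \<sigma>3 \<pi>3) (\<lambda>f. G (F f))"
proof -
  let ?J2 = "Jideal q \<sigma>2 \<pi>2" and ?J3 = "Jideal q \<sigma>3 \<pi>3"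
  note Fl = coalg_iso_mapD(1)[OF F] and Ff = coalg_iso_mapD(2)[OF F] and Fi = coalg_iso_mapD(3)[OF F]
    and Fs = coalg_iso_mapD(4)[OF F] and Fd = coalg_iso_mapD(5)[OF F] and Fe = coalg_iso_mapD(6)[OF F]
  note Gl = coalg_iso_mapD(1)[OF G] and Gf = coalg_iso_mapD(2)[OF G] and Gi = coalg_iso_mapD(3)[OF G]
    and Gs = coalg_iso_mapD(4)[OF G] and Gd = coalg_iso_mapD(5)[OF G] and Ge = coalg_iso_mapD(6)[OF G]
  have lin: "flinear (\<lambda>f. G (F f))" by (rule flinear_comp[OF Gl Fl Ff])
  have surj: "\<exists>f\<in>finsupp. g - G (F f) \<in> ?J3" if g: "g \<in> finsupp" for g
  proof -
    obtain h where h: "h \<in> finsupp" "g - G h \<in> ?J3" using Gs[OF g] by blast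
    obtain f where f: "f \<in> finsupp" "h - F f \<in> ?J2" using Fs[OF h(1)] by blast
    have "G (h - F f) \<in> ?J3" using Gi[of "h - F f"] f h Ff by auto
    then have "G h - G (F f) \<in> ?J3" using flinear_diff[OF Gl h(1) Ff[OF f(1)]] by simp
    with h(2) f(1) show ?thesis by (blast intro: Jideal_diff_trans)
  qed
  have del: "tmap (\<lambda>f. G (F f)) (\<lambda>f. G (F f)) (fcomult f) - fcomult (G (F f)) \<in> tsub ?J3"
    if f: "f \<in> finsupp" for f
  proof -
    have d1: "tmap G G (tmap F F (fcomult f) - fcomult (F f)) \<in> tsub ?J3"
      by (rule tmap_tsub[OF Gl Gf _ _ Fd[OF f]]) (use Jideal_finsupp Gi in blast)+
    have fin1: "tmap F F (fcomult f) \<in> finsupp" using Ff by (auto intro!: finsupp_tmap)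
    have fin2: "fcomult (F f) \<in> finsupp" using Ff[OF f] by auto
    have "tmap G G (tmap F F (fcomult f) - fcomult (F f)) = tmap G G (tmap F F (fcomult f)) - tmap G G (fcomult (F f))"
      by (rule flinear_diff[OF flinear_tmap fin1 fin2])
    also have "tmap G G (tmap F F (fcomult f)) = tmap (\<lambda>f. G (F f)) (\<lambda>f. G (F f)) (fcomult f)"
      by (rule tmap_comp[OF Fl Gl Ff finsupp_fcomult[OF f]])
    finally have "tmap (\<lambda>f. G (F f)) (\<lambda>f. G (F f)) (fcomult f) - tmap G G (fcomult (F f)) \<in> tsub ?J3"
      using d1 by simp
    from tsub_add[OF this Gd[OF Ff[OF f]]] show ?thesis by simp
  qed
  show ?thesis
    unfolding coalg_iso_map_def using lin surj del Ff Gf Fi Gi Fe Ge by auto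
qed

lemma rmod_map_comp:
  assumes F: "coalg_iso_map (Jideal q \<sigma>1 \<pi>1) (Jideal q \<sigma>2 \<pi>2) F"
    and G: "coalg_iso_map (Jideal q \<sigma>2 \<pi>2) (Jideal q \<sigma>3 \<pi>3) G"
    and RF: "rmod_map (Jideal q \<sigma>2 \<pi>2) F" and RG: "rmod_map (Jideal q \<sigma>3 \<pi>3) G"
  shows "rmod_map (Jideal q \<sigma>3 \<pi>3) (\<lambda>f. G (F f))"
  unfolding rmod_map_def
proof (intro ballI)
  let ?J2 = "Jideal q \<sigma>2 \<pi>2" and ?J3 = "Jideal q \<sigma>3 \<pi>3"
  fix f g :: fa assume f: "f \<in> finsupp" and g: "g \<in> finsupp"
  note Ff = coalg_iso_mapD(2)[OF F]
  note Gl = coalg_iso_mapD(1)[OF G] and Gi = coalg_iso_mapD(3)[OF G]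
  have fg: "fmul f g \<in> finsupp" using f g by auto
  have a: "F (fmul f g) - fmul (F f) g \<in> ?J2" using RF f g unfolding rmod_map_def by blast
  have afin: "F (fmul f g) - fmul (F f) g \<in> finsupp" using Ff[OF fg] Ff[OF f] g by auto
  have b: "G (fmul (F f) g) - fmul (G (F f)) g \<in> ?J3" using RG Ff[OF f] g unfolding rmod_map_def by blast
  have "G (F (fmul f g) - fmul (F f) g) \<in> ?J3" using Gi[OF afin] a by blast
  moreover have "G (F (fmul f g) - fmul (F f) g) = G (F (fmul f g)) - G (fmul (F f) g)"
    by (rule flinear_diff[OF Gl Ff[OF fg]]) (use Ff[OF f] g in auto)
  ultimately have "G (F (fmul f g)) - G (fmul (F f) g) \<in> ?J3" by simp
  then show "G (F (fmul f g)) - fmul (G (F f)) g \<in> ?J3" using b by (rule Jideal_diff_trans)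
qed

definition coalg_rmod_iso :: "fa set \<Rightarrow> fa set \<Rightarrow> bool" where
  "coalg_rmod_iso J J' \<longleftrightarrow> (\<exists>F. coalg_iso_map J J' F \<and> rmod_map J' F)"

lemma coalg_rmod_iso_refl: "coalg_rmod_iso (Jideal q \<sigma> \<pi>) (Jideal q \<sigma> \<pi>)"
  unfolding coalg_rmod_iso_def
  by (rule exI, rule left_mult_iso[where x=fone and x'=fone]) (auto simp: Jideal_zero fcomult_fone tsub_zero feps_fone)

lemma coalg_rmod_iso_trans:
  "coalg_rmod_iso (Jideal q \<sigma>1 \<pi>1) (Jideal q \<sigma>2 \<pi>2) \<Longrightarrow> coalg_rmod_iso (Jideal q \<sigma>2 \<pi>2) (Jideal q \<sigma>3 \<pi>3)
   \<Longrightarrow> coalg_rmod_iso (Jideal q \<sigma>1 \<pi>1) (Jideal q \<sigma>3 \<pi>3)"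
  unfolding coalg_rmod_iso_def using coalg_iso_map_comp rmod_map_comp by blast

section \<open>Shifting the roots of \<open>X\<^sup>2 - \<sigma> X + \<pi>\<close>\<close>

definition shift :: "complex \<Rightarrow> fa" where "shift B = gD - fsc B gB"

lemma finsupp_shift[simp, intro]: "shift B \<in> finsupp" by (auto simp: shift_def)

lemmas gen_defs = gA_def gB_def gC_def gD_def fone_def gen_ad_def gen_cb_def shift_def

lemma shift_mult_gen_cb_eq:
  assumes "q \<noteq> 0"
  shows "fmul (shift B) (gen_cb \<pi>) = fsc (inverse q) (fmul (gen_cb \<pi>) gD) - fsc B (fmul (gen_cb \<pi>) gB)
     - fsc (\<pi>/q) (rel_bd q) - fsc (inverse q) (rel_cd q) - fsc B rel_bc"
  unfolding gen_defs rel_defs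
  apply (simp only: fmul_lin fmul_wmon)
  apply (rule ext)
  subgoal for w by (cases "w \<in> set [[GD,GB],[GD,GC],[GB,GB],[GB,GC],[GB,GD],[GC,GB],[GC,GD]]") (use assms in \<open>auto simp: fun_apply_simps wmon_def field_simps\<close>)
  done

lemma shift_mult_gen_ad_eq:
  assumes "q \<noteq> 0"
  shows "fmul (shift B) (gen_ad (B / q + B' * q)) = rel_da q - rel_ad q + fmul (gen_ad (B + B')) gD
     - fsc (B/q) (fmul (gen_ad (B + B')) gB) + fsc (B/q^2 - (B / q + B' * q)/q) (rel_bd q) + fsc (B/q) (rel_ab q)
     + fsc (1/q - q) (fmul (gen_cb (B * B')) gB) + fsc (1/q - q) rel_bc"
  unfolding gen_defs rel_defs
  apply (simp only: fmul_lin fmul_wmon append.simps)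
  apply (rule ext)
  subgoal for w by (cases "w \<in> set [[GD,GA],[GD,GD],[GD,GB],[GB,GA],[GB,GD],[GB,GB],[GA,GB],[GB,GC],[GC,GB],[GA,GD],[]]") (use assms in \<open>auto simp: fun_apply_simps wmon_def field_simps power2_eq_square\<close>)
  done

lemma shift_mult_shift_eq:
  assumes "q \<noteq> 0"
  shows "fmul (shift B) (shift (B' * q)) - fone = rel_ad q - fmul (gen_ad (B + B')) gD
     + fsc B' (rel_bd q) + fsc q (fmul (gen_cb (B * B')) gB) + fsc q rel_bc"
  unfolding gen_defs rel_defs
  apply (simp only: fmul_lin fmul_wmon append.simps)
  apply (rule ext)
  subgoal for w by (cases "w \<in> set [[GD,GA],[GD,GD],[GD,GB],[GB,GA],[GB,GD],[GB,GB],[GA,GB],[GB,GC],[GC,GB],[GA,GD],[]]") (use assms in \<open>auto simp: fun_apply_simps wmon_def field_simps\<close>)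
  done

lemma shift_mult_gen_ad: "q \<noteq> 0 \<Longrightarrow> fmul (shift B) (gen_ad (B / q + B' * q)) \<in> Jideal q (B + B') (B * B')"
  unfolding shift_mult_gen_ad_eq
  by (intro Jideal_add Jideal_diff Jideal_fsc rels_in_Jideal Jideal_gen_ad Jideal_gen_cb finsupp_gens)

lemma shift_mult_gen_cb: "q \<noteq> 0 \<Longrightarrow> fmul (shift B) (gen_cb \<pi>) \<in> Jideal q \<sigma> \<pi>"
  unfolding shift_mult_gen_cb_eq
  by (intro Jideal_add Jideal_diff Jideal_fsc rels_in_Jideal Jideal_gen_ad Jideal_gen_cb finsupp_gens)

lemma shift_inverse: "q \<noteq> 0 \<Longrightarrow> fmul (shift B) (shift (B' * q)) - fone \<in> Jideal q (B + B') (B * B')"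
  unfolding shift_mult_shift_eq
  by (intro Jideal_add Jideal_diff Jideal_fsc rels_in_Jideal Jideal_gen_ad Jideal_gen_cb finsupp_gens)

lemma shift_mult_Jideal:
  "q \<noteq> 0 \<Longrightarrow> j \<in> Jideal q (B / q + B' * q) (B * B') \<Longrightarrow> fmul (shift B) j \<in> Jideal q (B + B') (B * B')"
  by (rule Jideal_mult_left[OF finsupp_shift shift_mult_gen_ad shift_mult_gen_cb])

lemma fcomult_shift:
  "fcomult (shift B) - tens (shift B) (shift B) = tens (gen_cb (B * B') - fsc B (gen_ad (B + B'))) gB"
  unfolding shift_def gen_ad_def gen_cb_def
  by (simp add: fcomult_diff fcomult_fsc fcomult_gB fcomult_gD tens_lin fsc_add fsc_diff fsc_fsc algebra_simps fsc_plus)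

lemma feps_shift: "feps (shift B) = 1"
  unfolding shift_def gD_def gB_def
  by (simp add: feps_add[symmetric] feps_fsc[symmetric] feps_wmon weps_def diff_conv_add_uminus
       fsc_minus1[symmetric] fsc_fsc finsupp_fsc feps_add feps_fsc)

lemma shift_iso:
  assumes q: "q \<noteq> 0" and "\<sigma> = B + B'" and "\<pi> = B * B'" and "\<sigma>' = B / q + B' * q"
  shows "coalg_rmod_iso (Jideal q \<sigma>' \<pi>) (Jideal q \<sigma> \<pi>)"
  unfolding coalg_rmod_iso_def
proof (rule exI, rule left_mult_iso[where x'="shift (B' * q)"])
  have swap: "B' * q / q + B / q * q = B + B'" "B' * q * (B / q) = B * B'"
    "B' * q + B / q = B / q + B' * q" "B' * B = B * B'"
    using q by (simp_all add: field_simps)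
  show "fmul (shift B) j \<in> Jideal q \<sigma> \<pi>" if "j \<in> Jideal q \<sigma>' \<pi>" for j
    using shift_mult_Jideal[OF q, of j B B'] that assms(2-4) by simp
  show "fmul (shift (B' * q)) j \<in> Jideal q \<sigma>' \<pi>" if "j \<in> Jideal q \<sigma> \<pi>" for j
    using shift_mult_Jideal[OF q, of j "B' * q" "B / q"] that assms(2-4) swap by simp
  show "fmul (shift (B' * q)) (shift B) - fone \<in> Jideal q \<sigma>' \<pi>"
    using shift_inverse[OF q, of "B' * q" "B / q"] assms(2-4) swap q by simp
  show "fmul (shift B) (shift (B' * q)) - fone \<in> Jideal q \<sigma> \<pi>"
    using shift_inverse[OF q, of B B'] assms(2-4) by simp
  show "fcomult (shift B) - tens (shift B) (shift B) \<in> tsub (Jideal q \<sigma> \<pi>)"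
    unfolding fcomult_shift[of B B'] using assms
    by (intro tsub_left Jideal_diff Jideal_fsc) (auto intro: Jideal_gen_ad[of fone, simplified] Jideal_gen_cb[of fone, simplified])
qed (auto simp: feps_shift)

lemma shift_chain_iso:
  assumes q: "q \<noteq> 0"
  shows "coalg_rmod_iso (Jideal q (\<beta> + \<beta>') (\<beta> * \<beta>')) (Jideal q (\<beta> * q powi (- k) + \<beta>' * q powi k) (\<beta> * \<beta>'))"
proof (induction k rule: int_induct[where k=0])
  case base
  then show ?case using coalg_rmod_iso_refl by simp
next
  case (step1 i)
  have "coalg_rmod_iso (Jideal q (\<beta> * q powi (- i) + \<beta>' * q powi i) (\<beta> * \<beta>'))
      (Jideal q (\<beta> * q powi (- (i + 1)) + \<beta>' * q powi (i + 1)) (\<beta> * \<beta>'))"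
    by (rule shift_iso[OF q, where B = "\<beta>' * q powi (i + 1)" and B' = "\<beta> * q powi (- (i + 1))"])
       (use q in \<open>simp_all add: power_int_diff power_int_add power_int_minus field_simps\<close>)
  with step1(2) show ?case by (rule coalg_rmod_iso_trans)
next
  case (step2 i)
  have "coalg_rmod_iso (Jideal q (\<beta> * q powi (- i) + \<beta>' * q powi i) (\<beta> * \<beta>'))
      (Jideal q (\<beta> * q powi (- (i - 1)) + \<beta>' * q powi (i - 1)) (\<beta> * \<beta>'))"
    by (rule shift_iso[OF q, where B = "\<beta> * q powi (- (i - 1))" and B' = "\<beta>' * q powi (i - 1)"])
       (use q in \<open>simp_all add: power_int_diff power_int_add power_int_minus field_simps\<close>)
  with step2(2) show ?case by (rule coalg_rmod_iso_trans)
qed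

section \<open>Rescaling \<open>b\<close> and \<open>c\<close>\<close>

text \<open>The algebra automorphism \<open>b \<mapsto> t b\<close>, \<open>c \<mapsto> t\<^sup>-\<^sup>1 c\<close> fixing \<open>a\<close> and \<open>d\<close>: a word is scaled by \<open>t\<close>
  to the power (sum of column indices) - (sum of row indices).\<close>

definition word_weight :: "complex \<Rightarrow> gen list \<Rightarrow> complex" where
  "word_weight t w = prod_list (map (\<lambda>x. t powi (int (gcol x) - int (grow x))) w)"

definition rescale :: "complex \<Rightarrow> fa \<Rightarrow> fa" where
  "rescale t f = (\<lambda>w. word_weight t w * f w)"

lemma word_weight_append: "word_weight t (u @ v) = word_weight t u * word_weight t v" by (simp add: word_weight_def)
lemma word_weight_Nil[simp]: "word_weight t [] = 1" by (simp add: word_weight_def)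
lemma word_weight_Cons: "word_weight t (x # w) = t powi (int (gcol x) - int (grow x)) * word_weight t w" by (simp add: word_weight_def)

lemma rescale_fmul: "rescale t (fmul f g) = fmul (rescale t f) (rescale t g)"
proof -
  have "word_weight t w = word_weight t (take k w) * word_weight t (drop k w)" for k w
    by (metis append_take_drop_id word_weight_append)
  then show ?thesis
    by (auto simp: rescale_def fmul_def fun_eq_iff sum_distrib_left mult_ac intro!: sum.cong)
qed

lemma rescale_add: "rescale t (f + g) = rescale t f + rescale t g" by (simp add: rescale_def fun_eq_iff fun_apply_simps algebra_simps)
lemma rescale_diff: "rescale t (f - g) = rescale t f - rescale t g" by (simp add: rescale_def fun_eq_iff fun_apply_simps algebra_simps)
lemma rescale_fsc: "rescale t (fsc c f) = fsc c (rescale t f)" by (simp add: rescale_def fun_eq_iff fun_apply_simps algebra_simps)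
lemma rescale_wmon: "rescale t (wmon w) = fsc (word_weight t w) (wmon w)" by (simp add: rescale_def fun_eq_iff fun_apply_simps wmon_def)
lemma flinear_rescale: "flinear (rescale t)" by (simp add: flinear_def rescale_add rescale_fsc)
lemma finsupp_rescale[intro]: "f \<in> finsupp \<Longrightarrow> rescale t f \<in> finsupp"
  unfolding finsupp_def rescale_def mem_Collect_eq by (rule rev_finite_subset) auto

lemma rescale_gens: "rescale t gA = gA" "rescale t gB = fsc t gB" "rescale t gC = fsc (inverse t) gC" "rescale t gD = gD"
  "rescale t fone = fone"
  by (simp_all add: gA_def gB_def gC_def gD_def fone_def rescale_wmon word_weight_def power_int_minus)

lemma rescale_inverse: "t \<noteq> 0 \<Longrightarrow> rescale (inverse t) (rescale t f) = f"
proof -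
  assume t: "t \<noteq> 0"
  have "word_weight (inverse t) w * word_weight t w = 1" for w
    by (induction w) (simp_all add: word_weight_Cons power_int_inverse t field_simps power_int_not_zero)
  then show ?thesis by (simp add: rescale_def fun_eq_iff mult.assoc[symmetric])
qed

lemma rescale_rel: "t \<noteq> 0 \<Longrightarrow> r \<in> slq_rels q \<Longrightarrow> \<exists>c. rescale t r = fsc c r"
  unfolding slq_rels_eq
  by (auto simp: rel_defs rescale_diff rescale_fmul rescale_gens rescale_fsc fmul_lin fsc_diff fsc_fsc mult.commute
           intro: exI[of _ t] exI[of _ "inverse t"] exI[of _ 1])

lemma rescale_gen_ad: "rescale t (gen_ad \<sigma>) = gen_ad (\<sigma> * t)"
  by (simp add: gen_ad_def rescale_add rescale_diff rescale_fsc rescale_gens fsc_fsc mult.commute)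
lemma rescale_gen_cb: "t \<noteq> 0 \<Longrightarrow> rescale t (gen_cb \<pi>) = fsc (inverse t) (gen_cb (\<pi> * t^2))"
  by (simp add: gen_cb_def rescale_add rescale_fsc rescale_gens fsc_fsc fsc_add power2_eq_square field_simps)

lemma rescale_Jideal:
  assumes t: "t \<noteq> 0" and j: "j \<in> Jideal q \<sigma> \<pi>"
  shows "rescale t j \<in> Jideal q (\<sigma> * t) (\<pi> * t^2)"
  unfolding Jideal_def
proof (rule Jideal_image[OF flinear_rescale _ _ _ j])
  fix x r y :: fa assume r: "r \<in> slq_rels q" and "x \<in> finsupp" "y \<in> finsupp"
  moreover obtain c where "rescale t r = fsc c r" using rescale_rel[OF t r] by blast
  ultimately show "rescale t (fmul (fmul x r) y) \<in> lspan (rel_multiples q \<union> cgen_multiples (\<sigma> * t) (\<pi> * t^2))"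
    using Jideal_rel[of r q "rescale t x" "rescale t y" "\<sigma> * t" "\<pi> * t^2"]
    by (simp add: rescale_fmul fmul_fsc_left fmul_fsc_right finsupp_rescale Jideal_fsc Jideal_def[symmetric])
next
  fix y :: fa assume "y \<in> finsupp"
  then show "rescale t (fmul (gen_ad \<sigma>) y) \<in> lspan (rel_multiples q \<union> cgen_multiples (\<sigma> * t) (\<pi> * t^2))"
    and "rescale t (fmul (gen_cb \<pi>) y) \<in> lspan (rel_multiples q \<union> cgen_multiples (\<sigma> * t) (\<pi> * t^2))"
    using t by (simp_all add: rescale_fmul rescale_gen_ad rescale_gen_cb fmul_fsc_left finsupp_rescale
        Jideal_gen_ad Jideal_gen_cb Jideal_fsc Jideal_def[symmetric])
qed

lemma word_weight_merge_letter:
  fixes t :: complex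
  assumes t: "t \<noteq> 0" and c: "gcol x = grow y"
  shows "t powi (int (gcol (gent (grow x) (gcol y))) - int (grow (gent (grow x) (gcol y))))
       = t powi (int (gcol x) - int (grow x)) * t powi (int (gcol y) - int (grow y))"
  using c t by (cases x; cases y) (simp_all add: gent_def power_int_minus)

lemma composable_Cons: "composable (x # u) (y # v) \<longleftrightarrow> gcol x = grow y \<and> composable u v"
  by (auto simp: composable_def less_Suc_eq_0_disj)

lemma word_weight_merge_word:
  "t \<noteq> 0 \<Longrightarrow> composable u v \<Longrightarrow> word_weight t (merge_word u v) = word_weight t u * word_weight t v"
proof (induction u arbitrary: v)
  case Nil then show ?case by (simp add: composable_def merge_word_def)
next
  case (Cons x u)
  then obtain y v' where v: "v = y # v'" by (cases v) (auto simp: composable_def)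
  with Cons.prems have "gcol x = grow y" "composable u v'" by (simp_all add: composable_Cons)
  then show ?case
    using Cons.IH[OF Cons.prems(1)] word_weight_merge_letter[OF Cons.prems(1)]
    by (simp add: v merge_word_def word_weight_Cons mult_ac)
qed

lemma fcomult_rescale: "t \<noteq> 0 \<Longrightarrow> fcomult (rescale t f) (u, v) = word_weight t u * word_weight t v * fcomult f (u, v)"
  by (simp add: fcomult_apply rescale_def word_weight_merge_word)

lemma tmap_rescale:
  assumes h: "h \<in> finsupp"
  shows "tmap (rescale t) (rescale t) h = (\<lambda>(u, v). word_weight t u * word_weight t v * h (u, v))"
proof (rule flinear_eqI[OF flinear_tmap _ _ h])
  show "flinear (\<lambda>h. (\<lambda>(u, v). word_weight t u * word_weight t v * h (u, v)))"
    by (simp add: flinear_def fun_eq_iff fun_apply_simps algebra_simps)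
  fix p show "tmap (rescale t) (rescale t) (pmon p) = (\<lambda>(u, v). word_weight t u * word_weight t v * pmon p (u, v))"
    by (cases p) (simp only: tmap_pmon, auto simp: rescale_def tens_def fun_eq_iff wmon_def pmon_def)
qed

lemma feps_rescale:
  assumes f: "f \<in> finsupp"
  shows "feps (rescale t f) = feps f"
proof -
  have fin: "finite (supp f)" using f by (simp add: finsupp_iff)
  have s: "supp (rescale t f) \<subseteq> supp f" by (auto simp: supp_def rescale_def)
  have w: "word_weight t w * weps w = weps w" for w
  proof (cases "\<forall>x\<in>set w. x = GA \<or> x = GD")
    case True
    then have "word_weight t w = 1" by (induction w) (auto simp: word_weight_Cons)
    then show ?thesis by simp
  next
    case False
    then have "weps w = 0" by (auto simp: weps_def)
    then show ?thesis by simp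
  qed
  have "feps (rescale t f) = (\<Sum>w\<in>supp f. rescale t f w * weps w)" unfolding feps_eq_wsum by (rule wsum_superset[OF fin s])
  also have "\<dots> = (\<Sum>w\<in>supp f. f w * weps w)" by (simp add: rescale_def mult.assoc w mult.left_commute)
  also have "\<dots> = feps f" unfolding feps_eq_wsum by (rule wsum_superset[OF fin order_refl, symmetric])
  finally show ?thesis .
qed

lemma rescale_iso:
  assumes t: "t \<noteq> 0"
  shows "coalg_iso_map (Jideal q \<sigma> \<pi>) (Jideal q (\<sigma> * t) (\<pi> * t^2)) (rescale t)"
  unfolding coalg_iso_map_def
proof (intro conjI ballI)
  show "flinear (rescale t)" by (rule flinear_rescale)
  show "rescale t ` finsupp \<subseteq> finsupp" by auto
next
  fix f :: fa assume f: "f \<in> finsupp"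
  show "rescale t f \<in> Jideal q (\<sigma> * t) (\<pi> * t^2) \<longleftrightarrow> f \<in> Jideal q \<sigma> \<pi>"
  proof
    assume "rescale t f \<in> Jideal q (\<sigma> * t) (\<pi> * t^2)"
    from rescale_Jideal[OF _ this, of "inverse t"] t
    have "rescale (inverse t) (rescale t f) \<in> Jideal q (\<sigma> * t * inverse t) (\<pi> * t^2 * (inverse t)^2)" by simp
    moreover have "\<sigma> * t * inverse t = \<sigma>" "\<pi> * t^2 * (inverse t)^2 = \<pi>" using t
      by (simp_all add: power2_eq_square field_simps)
    ultimately show "f \<in> Jideal q \<sigma> \<pi>" using rescale_inverse[OF t, of f] by simp
  qed (rule rescale_Jideal[OF t])
  show "tmap (rescale t) (rescale t) (fcomult f) - fcomult (rescale t f) \<in> tsub (Jideal q (\<sigma> * t) (\<pi> * t^2))"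
  proof -
    have "tmap (rescale t) (rescale t) (fcomult f) = fcomult (rescale t f)"
      using fcomult_rescale[OF t, of f] tmap_rescale[OF finsupp_fcomult[OF f], of t] by (auto simp: fun_eq_iff)
    then show ?thesis by (simp add: tsub_zero)
  qed
  show "feps (rescale t f) = feps f" by (rule feps_rescale[OF f])
next
  fix g :: fa assume g: "g \<in> finsupp"
  have "rescale t (rescale (inverse t) g) = g" using rescale_inverse[of "inverse t" g] t by simp
  then show "\<exists>f\<in>finsupp. g - rescale t f \<in> Jideal q (\<sigma> * t) (\<pi> * t^2)"
    using g by (intro bexI[of _ "rescale (inverse t) g"]) (auto simp: Jideal_zero)
qed

section \<open>A representation on Laurent polynomials\<close>

text \<open>The basis vector \<open>t\<^sup>n\<close> of \<open>\<complex>[t, t\<^sup>-\<^sup>1]\<close> is \<open>pmon n\<close>, and the free algebra acts from the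
  right.  With \<open>B\<^sub>n = \<beta> q\<^sup>-\<^sup>n\<close> and \<open>B'\<^sub>n = \<beta>' q\<^sup>n\<close>, the coefficients are chosen so that
  \<open>t\<^sup>n (d - B\<^sub>n b) = t\<^sup>n\<^sup>+\<^sup>1\<close> and \<open>t\<^sup>n (d - B'\<^sub>n b) = t\<^sup>n\<^sup>-\<^sup>1\<close>, while \<open>a\<close> and \<open>c\<close> act on \<open>t\<^sup>n\<close> as
  \<open>d - (B\<^sub>n + B'\<^sub>n) b\<close> and \<open>-\<beta> \<beta>' b\<close>; this needs \<open>B\<^sub>n \<noteq> B'\<^sub>n\<close>.\<close>

locale laurent_rep =
  fixes q \<beta> \<beta>' :: complex
  assumes q0: "q \<noteq> 0" and roots_distinct: "\<And>n. \<beta> * q powi (- n) \<noteq> \<beta>' * q powi n"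
begin

definition B :: "int \<Rightarrow> complex" where "B n = \<beta> * q powi (- n)"
definition B' :: "int \<Rightarrow> complex" where "B' n = \<beta>' * q powi n"
definition D :: "int \<Rightarrow> complex" where "D n = B n - B' n"

fun up_coeff :: "gen \<Rightarrow> int \<Rightarrow> complex" where
  "up_coeff GA n = B n / D n" | "up_coeff GB n = - 1 / D n"
| "up_coeff GC n = \<beta> * \<beta>' / D n" | "up_coeff GD n = - B' n / D n"
fun down_coeff :: "gen \<Rightarrow> int \<Rightarrow> complex" where
  "down_coeff GA n = - B' n / D n" | "down_coeff GB n = 1 / D n"
| "down_coeff GC n = - (\<beta> * \<beta>') / D n" | "down_coeff GD n = B n / D n"

definition act :: "(int \<Rightarrow> complex) \<Rightarrow> gen \<Rightarrow> int \<Rightarrow> complex" where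
  "act v g = (\<lambda>m. v (m - 1) * up_coeff g (m - 1) + v (m + 1) * down_coeff g (m + 1))"

lemma D_nonzero: "D n \<noteq> 0" using roots_distinct[of n] by (simp add: D_def B_def B'_def)

lemma B_0: "B 0 = \<beta>" "B' 0 = \<beta>'" by (simp_all add: B_def B'_def)

lemma B_succ: "B (n + 1) = B n / q" "B' (n + 1) = B' n * q"
proof -
  have "- (n + 1) = - n - 1" by simp
  then show "B (n + 1) = B n / q" using power_int_diff[of q "- n" 1] q0 by (simp add: B_def)
  show "B' (n + 1) = B' n * q" using q0 by (simp add: B'_def power_int_add_1)
qed

lemma B_pred: "B (n - 1) = B n * q" "B' (n - 1) = B' n / q"
  using B_succ[of "n - 1"] q0 by (simp_all add: field_simps)

lemma B_mult_B': "B n * B' n = \<beta> * \<beta>'"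
proof -
  have "q powi (- n) * q powi n = 1" using q0 by (simp add: power_int_minus power_int_not_zero)
  then show ?thesis by (simp add: B_def B'_def mult_ac)
qed

lemma B_shift2: "B (m - 2) = B m * q^2" "B (m + 2) = B m / q^2"
  "B' (m - 2) = B' m / q^2" "B' (m + 2) = B' m * q^2"
  using B_pred[of m] B_pred[of "m - 1"] B_succ[of m] B_succ[of "m + 1"] q0
  by (simp_all add: field_simps power2_eq_square)

text \<open>The same equations with the index written as \<open>k + m\<close>, the normal form produced by
  \<open>field_simps\<close>.\<close>

lemma B_shift_comm:
  "B (1 + m) = B m / q" "B (2 + m) = B m / q^2" "B (-1 + m) = B m * q" "B (-2 + m) = B m * q^2"
  "B' (1 + m) = B' m * q" "B' (2 + m) = B' m * q^2" "B' (-1 + m) = B' m / q" "B' (-2 + m) = B' m / q^2"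
  using B_succ[of m] B_pred[of m] B_shift2[of m] by (simp_all add: add.commute)

lemmas B_shift = B_succ B_pred B_shift2

definition "coeff_low x y m = up_coeff x (m - 2) * up_coeff y (m - 1)"
definition "coeff_mid x y m = down_coeff x m * up_coeff y (m - 1) + up_coeff x m * down_coeff y (m + 1)"
definition "coeff_high x y m = down_coeff x (m + 2) * down_coeff y (m + 1)"

lemma act_act: "act (act v x) y m = v (m - 2) * coeff_low x y m + v m * coeff_mid x y m + v (m + 2) * coeff_high x y m"
proof -
  have e: "m - 1 - 1 = m - 2" "m - 1 + 1 = m" "m + 1 - 1 = m" "m + 1 + 1 = m + 2" by simp_all
  show ?thesis unfolding act_def e coeff_low_def coeff_mid_def coeff_high_def by (simp add: algebra_simps)
qed

text \<open>The defining relations of \<open>SL\<^sub>q(2)\<close>, read off band by band from \<open>act_act\<close>.\<close>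

lemma coeff_relations:
  "coeff_low GA GB m = q * coeff_low GB GA m" "coeff_mid GA GB m = q * coeff_mid GB GA m"
  "coeff_high GA GB m = q * coeff_high GB GA m"
  "coeff_low GA GC m = q * coeff_low GC GA m" "coeff_mid GA GC m = q * coeff_mid GC GA m"
  "coeff_high GA GC m = q * coeff_high GC GA m"
  "coeff_low GB GC m = 1 * coeff_low GC GB m" "coeff_mid GB GC m = 1 * coeff_mid GC GB m"
  "coeff_high GB GC m = 1 * coeff_high GC GB m"
  "coeff_low GB GD m = q * coeff_low GD GB m" "coeff_mid GB GD m = q * coeff_mid GD GB m"
  "coeff_high GB GD m = q * coeff_high GD GB m"
  "coeff_low GC GD m = q * coeff_low GD GC m" "coeff_mid GC GD m = q * coeff_mid GD GC m"
  "coeff_high GC GD m = q * coeff_high GD GC m"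
  "coeff_low GD GA m = inverse q * coeff_low GB GC m" "coeff_mid GD GA m = inverse q * coeff_mid GB GC m + 1"
  "coeff_high GD GA m = inverse q * coeff_high GB GC m"
  "coeff_low GA GD m = q * coeff_low GB GC m" "coeff_mid GA GD m = q * coeff_mid GB GC m + 1"
  "coeff_high GA GD m = q * coeff_high GB GC m"
  unfolding coeff_low_def coeff_mid_def coeff_high_def up_coeff.simps down_coeff.simps
    B_mult_B'[of m, symmetric] B_shift
  using D_nonzero[of "m - 2"] D_nonzero[of "m - 1"] D_nonzero[of m] D_nonzero[of "m + 1"] D_nonzero[of "m + 2"] q0
  by (simp add: field_simps; (simp add: D_def B_shift B_shift_comm)?; simp add: field_simps power2_eq_square)+

lemma act_add: "act (v + w) g = act v g + act w g"
  by (simp add: act_def fun_eq_iff fun_apply_simps algebra_simps)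
lemma act_fsc: "act (fsc c v) g = fsc c (act v g)"
  by (simp add: act_def fun_eq_iff fun_apply_simps algebra_simps)
lemma act_zero[simp]: "act 0 g = 0"
  by (simp add: act_def fun_eq_iff fun_apply_simps)

lemma finsupp_act[intro]: assumes v: "v \<in> finsupp" shows "act v g \<in> finsupp"
proof -
  have "supp (act v g) \<subseteq> (\<lambda>n. n + 1) ` supp v \<union> (\<lambda>n. n - 1) ` supp v"
  proof
    fix m assume "m \<in> supp (act v g)"
    then have "v (m - 1) \<noteq> 0 \<or> v (m + 1) \<noteq> 0" by (auto simp: supp_def act_def)
    then show "m \<in> (\<lambda>n. n + 1) ` supp v \<union> (\<lambda>n. n - 1) ` supp v"
      by (auto simp: supp_def image_iff)
  qed
  then show ?thesis using v by (auto simp: finsupp_iff intro: finite_subset)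
qed

definition act_word :: "(int \<Rightarrow> complex) \<Rightarrow> gen list \<Rightarrow> int \<Rightarrow> complex" where
  "act_word v w = foldl act v w"

lemma act_word_Nil[simp]: "act_word v [] = v" by (simp add: act_word_def)
lemma act_word_snoc: "act_word v (w @ [g]) = act (act_word v w) g" by (simp add: act_word_def)
lemma act_word_append: "act_word v (u @ w) = act_word (act_word v u) w" by (simp add: act_word_def)
lemma act_word_add: "act_word (v + v') w = act_word v w + act_word v' w"
  by (induction w arbitrary: v v') (simp_all add: act_word_def act_add)
lemma act_word_fsc: "act_word (fsc c v) w = fsc c (act_word v w)"
  by (induction w arbitrary: v) (simp_all add: act_word_def act_fsc)
lemma act_word_zero[simp]: "act_word 0 w = 0"
  by (induction w) (simp_all add: act_word_def)
lemma finsupp_act_word[intro]: "v \<in> finsupp \<Longrightarrow> act_word v w \<in> finsupp"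
  by (induction w arbitrary: v) (auto simp: act_word_def)

definition act_elem :: "(int \<Rightarrow> complex) \<Rightarrow> fa \<Rightarrow> int \<Rightarrow> complex" where
  "act_elem v f = lin_ext f (act_word v)"

lemma flinear_act_elem: "flinear (act_elem v)"
  unfolding act_elem_def[abs_def] by (rule flinear_lin_ext)

lemma act_elem_wmon[simp]: "act_elem v (wmon w) = act_word v w"
  by (simp add: act_elem_def wmon_pmon)

lemma act_elem_pmon[simp]: "act_elem v (pmon w) = act_word v w"
  by (simp add: act_elem_def)

lemma act_elem_vadd: "act_elem (v + v') f = act_elem v f + act_elem v' f"
  by (simp add: act_elem_def lin_ext_def act_word_add fsc_add sum.distrib)
lemma act_elem_vfsc: "act_elem (fsc c v) f = fsc c (act_elem v f)"
proof -
  have "fsc (f x) (fsc c (act_word v x)) = fsc c (fsc (f x) (act_word v x))" for x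
    by (simp add: fsc_fsc mult.commute)
  then show ?thesis
    by (simp add: act_elem_def lin_ext_def act_word_fsc fun_eq_iff sum_fun_apply fsc_apply sum_distrib_left mult.left_commute)
qed
lemma act_elem_vzero[simp]: "act_elem 0 f = 0"
  by (simp add: act_elem_def lin_ext_def)

lemma finsupp_act_elem[intro]: "v \<in> finsupp \<Longrightarrow> act_elem v f \<in> finsupp"
  unfolding act_elem_def by (rule finsupp_lin_ext) auto

lemma act_elem_fmul:
  assumes f: "f \<in> finsupp" and g: "g \<in> finsupp"
  shows "act_elem v (fmul f g) = act_elem (act_elem v f) g"
proof -
  have w: "act_elem v (fmul (wmon u) g) = act_elem (act_word v u) g" for v u
  proof (rule flinear_eqI[OF _ flinear_act_elem _ g, where \<phi>="\<lambda>g. act_elem v (fmul (wmon u) g)"])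
    show "flinear (\<lambda>g. act_elem v (fmul (wmon u) g))"
      by (rule flinear_comp[OF flinear_act_elem flinear_fmul_right]) auto
    show "act_elem v (fmul (wmon u) (pmon x)) = act_elem (act_word v u) (pmon x)" for x
      by (simp add: wmon_pmon[symmetric] fmul_wmon act_word_append)
  qed
  show ?thesis
  proof (rule flinear_eqI[OF _ _ _ f, where \<phi>="\<lambda>f. act_elem v (fmul f g)"])
    show "flinear (\<lambda>f. act_elem v (fmul f g))"
      by (rule flinear_comp[OF flinear_act_elem flinear_fmul_left]) (use g in auto)
    show "flinear (\<lambda>f. act_elem (act_elem v f) g)"
      unfolding flinear_def using flinear_act_elem[of v]
      by (simp add: flinear_add flinear_fsc act_elem_vadd act_elem_vfsc)
    show "act_elem v (fmul (pmon x) g) = act_elem (act_elem v (pmon x)) g" for x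
      using w[of v x] by (simp add: wmon_pmon)
  qed
qed

lemma act_elem_diff: "f \<in> finsupp \<Longrightarrow> g \<in> finsupp \<Longrightarrow> act_elem v (f - g) = act_elem v f - act_elem v g"
  by (rule flinear_diff[OF flinear_act_elem])
lemma act_elem_add: "f \<in> finsupp \<Longrightarrow> g \<in> finsupp \<Longrightarrow> act_elem v (f + g) = act_elem v f + act_elem v g"
  by (rule flinear_add[OF flinear_act_elem])
lemma act_elem_fsc: "f \<in> finsupp \<Longrightarrow> act_elem v (fsc c f) = fsc c (act_elem v f)"
  by (rule flinear_fsc[OF flinear_act_elem])

lemma act_elem_binomial: "act_elem v (fmul (wmon [x]) (wmon [y]) - fsc c (fmul (wmon [x']) (wmon [y']))) =
   act (act v x) y - fsc c (act (act v x') y')"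
  by (simp add: act_elem_diff act_elem_fsc finsupp_fsc finsupp_fmul fmul_wmon act_word_def)
lemma act_elem_binomial_minus_one: "act_elem v (fmul (wmon [x]) (wmon [y]) - fsc c (fmul (wmon [x']) (wmon [y'])) - fone) =
   act (act v x) y - fsc c (act (act v x') y') - v"
  by (simp add: act_elem_diff act_elem_fsc finsupp_fsc finsupp_fmul fmul_wmon act_word_def finsupp_diff fone_def)

lemma act_elem_rel:
  assumes r: "r \<in> slq_rels q"
  shows "act_elem v r = 0"
proof -
  have "r = fmul gA gB - fsc q (fmul gB gA) \<or> r = fmul gA gC - fsc q (fmul gC gA) \<or>
        r = fmul gB gC - fsc 1 (fmul gC gB) \<or> r = fmul gB gD - fsc q (fmul gD gB) \<or>
        r = fmul gC gD - fsc q (fmul gD gC) \<or> r = fmul gD gA - fsc (inverse q) (fmul gB gC) - fone \<or>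
        r = fmul gA gD - fsc q (fmul gB gC) - fone"
    using r unfolding slq_rels_def by simp
  then show ?thesis
    unfolding gA_def gB_def gC_def gD_def
    by (elim disjE; simp only: act_elem_binomial act_elem_binomial_minus_one;
        simp add: fun_eq_iff fun_apply_simps act_act coeff_relations algebra_simps)
qed

lemma act_elem_gen_cb: "act_elem v (gen_cb (\<beta> * \<beta>')) = 0"
proof -
  have "act_elem v (gen_cb (\<beta> * \<beta>')) = fsc (\<beta> * \<beta>') (act v GB) + act v GC"
    unfolding gen_cb_def gB_def gC_def
    by (simp add: act_elem_add act_elem_fsc finsupp_fsc act_word_def finsupp_add)
  also have "\<dots> = 0"
    using D_nonzero by (simp add: fun_eq_iff fun_apply_simps act_def field_simps)
  finally show ?thesis .
qed

lemma act_pmon: "act (pmon n) g = fsc (up_coeff g n) (pmon (n + 1)) + fsc (down_coeff g n) (pmon (n - 1))"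
  by (auto simp: act_def fun_eq_iff fun_apply_simps pmon_def)

lemma act_elem_gen_ad: "act_elem (pmon 0) (gen_ad (\<beta> + \<beta>')) = 0"
proof -
  have "up_coeff GA n - up_coeff GD n + (B n + B' n) * up_coeff GB n = 0"
    "down_coeff GA n - down_coeff GD n + (B n + B' n) * down_coeff GB n = 0" for n
    using D_nonzero[of n] by (simp_all add: field_simps)
  from this[of 0] have coeffs: "up_coeff GA 0 - up_coeff GD 0 + (\<beta> + \<beta>') * up_coeff GB 0 = 0"
    "down_coeff GA 0 - down_coeff GD 0 + (\<beta> + \<beta>') * down_coeff GB 0 = 0"
    by (simp_all only: B_0)
  have "(act (pmon 0) GA - act (pmon 0) GD + fsc (\<beta> + \<beta>') (act (pmon 0) GB)) m
      = pmon 0 (m - 1) * (up_coeff GA (m - 1) - up_coeff GD (m - 1) + (\<beta> + \<beta>') * up_coeff GB (m - 1))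
      + pmon 0 (m + 1) * (down_coeff GA (m + 1) - down_coeff GD (m + 1) + (\<beta> + \<beta>') * down_coeff GB (m + 1))"
    for m by (simp add: act_def fun_apply_simps algebra_simps del: up_coeff.simps down_coeff.simps)
  also have "\<dots> m = 0" for m
    using coeffs by (simp add: pmon_def del: up_coeff.simps down_coeff.simps)
  finally have "act (pmon 0) GA - act (pmon 0) GD + fsc (\<beta> + \<beta>') (act (pmon 0) GB) = 0"
    by (simp add: fun_eq_iff fun_apply_simps del: up_coeff.simps down_coeff.simps)
  then show ?thesis
    unfolding gen_ad_def gA_def gB_def gD_def
    by (simp add: act_elem_add act_elem_fsc act_elem_diff finsupp_fsc act_word_def finsupp_add finsupp_diff)
qed

definition phi :: "fa \<Rightarrow> int \<Rightarrow> complex" where "phi f = act_elem (pmon 0) f"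

lemma flinear_phi: "flinear phi" unfolding phi_def[abs_def] by (rule flinear_act_elem)
lemma finsupp_phi[intro]: "phi f \<in> finsupp" unfolding phi_def by auto
lemma phi_wmon: "phi (wmon w) = act_word (pmon 0) w" by (simp add: phi_def)

lemma phi_Jideal:
  assumes j: "j \<in> Jideal q (\<beta> + \<beta>') (\<beta> * \<beta>')"
  shows "phi j = 0"
proof -
  have "phi j \<in> lspan {}"
  proof (rule Jideal_image[OF flinear_phi _ _ _ j])
    fix x r y :: fa assume "r \<in> slq_rels q" "x \<in> finsupp" "y \<in> finsupp"
    then show "phi (fmul (fmul x r) y) \<in> lspan {}"
      by (simp add: phi_def act_elem_fmul act_elem_rel finsupp_fmul finsupp_rels lspan_empty)
  next
    fix y :: fa assume "y \<in> finsupp"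
    then show "phi (fmul (gen_ad (\<beta> + \<beta>')) y) \<in> lspan {}" "phi (fmul (gen_cb (\<beta> * \<beta>')) y) \<in> lspan {}"
      by (simp_all add: phi_def act_elem_fmul act_elem_gen_ad act_elem_gen_cb lspan_empty)
  qed
  then show ?thesis by (simp add: lspan_empty)
qed

abbreviation Jlevel :: "int \<Rightarrow> fa set" where "Jlevel n \<equiv> Jideal q (B n + B' n) (\<beta> * \<beta>')"

lemma Jlevel_0: "Jlevel 0 = Jideal q (\<beta> + \<beta>') (\<beta> * \<beta>')" by (simp add: B_0)

fun shift_prod_up :: "nat \<Rightarrow> fa" where
  "shift_prod_up 0 = fone" | "shift_prod_up (Suc k) = fmul (shift_prod_up k) (shift (B (int k)))"
fun shift_prod_down :: "nat \<Rightarrow> fa" where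
  "shift_prod_down 0 = fone" | "shift_prod_down (Suc k) = fmul (shift_prod_down k) (shift (B' (- int k)))"
definition shift_prod :: "int \<Rightarrow> fa" where "shift_prod n = (if n \<ge> 0 then shift_prod_up (nat n) else shift_prod_down (nat (- n)))"

lemma shift_prod_0[simp]: "shift_prod 0 = fone" by (simp add: shift_prod_def)
lemma shift_prod_succ: "n \<ge> 0 \<Longrightarrow> shift_prod (n + 1) = fmul (shift_prod n) (shift (B n))"
  by (simp add: shift_prod_def nat_add_distrib)
lemma shift_prod_pred: "n \<le> 0 \<Longrightarrow> shift_prod (n - 1) = fmul (shift_prod n) (shift (B' n))"
proof -
  assume n: "n \<le> 0"
  have "nat (- (n - 1)) = Suc (nat (- n))" using n by simp
  then show ?thesis using n by (cases "n = 0") (auto simp: shift_prod_def)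
qed

lemma finsupp_shift_prod_up: "shift_prod_up k \<in> finsupp" by (induction k) auto
lemma finsupp_shift_prod_down: "shift_prod_down k \<in> finsupp" by (induction k) auto
lemma finsupp_shift_prod[simp, intro]: "shift_prod n \<in> finsupp" by (simp add: shift_prod_def finsupp_shift_prod_up finsupp_shift_prod_down)

lemma shift_mult_Jlevel_succ: "j \<in> Jlevel (n + 1) \<Longrightarrow> fmul (shift (B n)) j \<in> Jlevel n"
  using shift_mult_Jideal[OF q0, of j "B n" "B' n"] by (simp add: B_succ B_mult_B')

lemma shift_mult_Jlevel_pred: "j \<in> Jlevel (n - 1) \<Longrightarrow> fmul (shift (B' n)) j \<in> Jlevel n"
  using shift_mult_Jideal[OF q0, of j "B' n" "B n"] q0 by (simp add: B_pred B_mult_B' add.commute mult.commute)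

lemma shift_prod_mult_Jlevel: "j \<in> Jlevel n \<Longrightarrow> fmul (shift_prod n) j \<in> Jlevel 0"
proof (induction n arbitrary: j rule: int_induct[where k=0])
  case base then show ?case by simp
next
  case (step1 i)
  have "fmul (shift_prod (i + 1)) j = fmul (shift_prod i) (fmul (shift (B i)) j)"
    using step1 Jideal_finsupp by (simp add: shift_prod_succ fmul_assoc)
  then show ?case using step1 shift_mult_Jlevel_succ by simp
next
  case (step2 i)
  have "fmul (shift_prod (i - 1)) j = fmul (shift_prod i) (fmul (shift (B' i)) j)"
    using step2 Jideal_finsupp by (simp add: shift_prod_pred fmul_assoc)
  then show ?case using step2 shift_mult_Jlevel_pred by simp
qed

lemma shift_inverse_succ: "fmul (shift (B n)) (shift (B' (n + 1))) - fone \<in> Jlevel n"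
  using shift_inverse[OF q0, of "B n" "B' n"] by (simp add: B_succ B_mult_B')
lemma shift_inverse_pred: "fmul (shift (B' n)) (shift (B (n - 1))) - fone \<in> Jlevel n"
  using shift_inverse[OF q0, of "B' n" "B n"] by (simp add: B_pred B_mult_B' add.commute mult.commute)

lemma shift_prod_mult_succ: "fmul (shift_prod n) (shift (B n)) - shift_prod (n + 1) \<in> Jlevel 0"
proof (cases "n \<ge> 0")
  case True then show ?thesis by (simp add: shift_prod_succ Jideal_zero)
next
  case False
  then have n: "n + 1 \<le> 0" by simp
  have e: "shift_prod n = fmul (shift_prod (n + 1)) (shift (B' (n + 1)))" using shift_prod_pred[OF n] by simp
  have "fmul (shift_prod n) (shift (B n)) - shift_prod (n + 1) =
        fmul (shift_prod (n + 1)) (fmul (shift (B' (n + 1))) (shift (B n)) - fone)"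
    by (simp add: e fmul_assoc fmul_diff_right)
  moreover have "fmul (shift (B' (n + 1))) (shift (B n)) - fone \<in> Jlevel (n + 1)"
    using shift_inverse_pred[of "n + 1"] by simp
  ultimately show ?thesis using shift_prod_mult_Jlevel by simp
qed

lemma shift_prod_mult_pred: "fmul (shift_prod n) (shift (B' n)) - shift_prod (n - 1) \<in> Jlevel 0"
proof (cases "n \<le> 0")
  case True then show ?thesis by (simp add: shift_prod_pred Jideal_zero)
next
  case False
  then have n: "n - 1 \<ge> 0" by simp
  have e: "shift_prod n = fmul (shift_prod (n - 1)) (shift (B (n - 1)))" using shift_prod_succ[OF n] by simp
  have "fmul (shift_prod n) (shift (B' n)) - shift_prod (n - 1) =
        fmul (shift_prod (n - 1)) (fmul (shift (B (n - 1))) (shift (B' n)) - fone)"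
    by (simp add: e fmul_assoc fmul_diff_right)
  moreover have "fmul (shift (B (n - 1))) (shift (B' n)) - fone \<in> Jlevel (n - 1)"
    using shift_inverse_succ[of "n - 1"] by simp
  ultimately show ?thesis using shift_prod_mult_Jlevel by simp
qed

text \<open>The coefficients of the representation come from writing each generator as a combination
  of \<open>y\<^sub>B\<^sub>n\<close> and \<open>y\<^sub>B\<^sub>'\<^sub>n\<close> modulo the ideal of level \<open>n\<close>.\<close>

fun level_correction :: "gen \<Rightarrow> int \<Rightarrow> fa" where
  "level_correction GA n = gen_ad (B n + B' n)" | "level_correction GB n = 0"
| "level_correction GC n = gen_cb (\<beta> * \<beta>')" | "level_correction GD n = 0"

lemma letter_decomp:
  "wmon [g] = fsc (up_coeff g n) (shift (B n)) + fsc (down_coeff g n) (shift (B' n)) + level_correction g n"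
proof -
  have "\<beta> * \<beta>' = B n * B' n" "B n = B' n + D n" by (simp_all add: B_mult_B' D_def)
  then show ?thesis
    using D_nonzero[of n] by (cases g) (auto simp: gen_defs fun_eq_iff fun_apply_simps wmon_def field_simps)
qed

lemma level_correction_in_Jlevel: "level_correction g n \<in> Jlevel n"
  using Jideal_gen_ad[of fone] Jideal_gen_cb[of fone] by (cases g) (simp_all add: Jideal_zero)

lemma shift_prod_mult_gen:
  "fmul (shift_prod n) (wmon [g]) - (fsc (up_coeff g n) (shift_prod (n + 1)) + fsc (down_coeff g n) (shift_prod (n - 1)))
   \<in> Jlevel 0"
proof -
  have "fmul (shift_prod n) (wmon [g]) - (fsc (up_coeff g n) (shift_prod (n + 1)) + fsc (down_coeff g n) (shift_prod (n - 1)))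
      = fsc (up_coeff g n) (fmul (shift_prod n) (shift (B n)) - shift_prod (n + 1))
      + fsc (down_coeff g n) (fmul (shift_prod n) (shift (B' n)) - shift_prod (n - 1))
      + fmul (shift_prod n) (level_correction g n)"
    by (subst letter_decomp[of g n]) (simp add: fmul_lin fsc_diff algebra_simps)
  then show ?thesis
    using shift_prod_mult_succ[of n] shift_prod_mult_pred[of n]
      shift_prod_mult_Jlevel[OF level_correction_in_Jlevel]
    by (simp add: Jideal_add Jideal_fsc)
qed

definition lift :: "(int \<Rightarrow> complex) \<Rightarrow> fa" where "lift v = lin_ext v shift_prod"

lemma flinear_lift: "flinear lift" unfolding lift_def[abs_def] by (rule flinear_lin_ext)
lemma lift_pmon[simp]: "lift (pmon n) = shift_prod n" by (simp add: lift_def)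
lemma finsupp_lift[intro]: "lift v \<in> finsupp" unfolding lift_def by (rule finsupp_lin_ext) auto
lemma lift_zero[simp]: "lift 0 = 0" using flinear_zero[OF flinear_lift] .

lemma lift_mult_gen:
  assumes V: "V \<in> finsupp"
  shows "fmul (lift V) (wmon [g]) - lift (act V g) \<in> Jlevel 0"
  using V
proof (induction rule: finsupp_induct)
  case zero then show ?case by (simp add: Jideal_zero)
next
  case (add n c V')
  have f1: "fsc c (pmon n) \<in> finsupp" by auto
  have s1: "lift (fsc c (pmon n) + V') = fsc c (shift_prod n) + lift V'"
    using flinear_add[OF flinear_lift f1 add(1)] flinear_fsc[OF flinear_lift finsupp_pmon] by simp
  have a1: "act (fsc c (pmon n) + V') g = fsc c (fsc (up_coeff g n) (pmon (n + 1)) + fsc (down_coeff g n) (pmon (n - 1))) + act V' g"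
    by (simp add: act_add act_fsc act_pmon)
  have f2: "fsc c (fsc (up_coeff g n) (pmon (n + 1)) + fsc (down_coeff g n) (pmon (n - 1))) \<in> finsupp" by (auto intro!: finsupp_fsc finsupp_add)
  have s2: "lift (act (fsc c (pmon n) + V') g) = fsc c (fsc (up_coeff g n) (shift_prod (n + 1)) + fsc (down_coeff g n) (shift_prod (n - 1))) + lift (act V' g)"
    unfolding a1 using flinear_add[OF flinear_lift f2 finsupp_act[OF add(1)]]
    by (simp add: flinear_fsc[OF flinear_lift] flinear_add[OF flinear_lift] finsupp_fsc finsupp_add)
  have "fmul (lift (fsc c (pmon n) + V')) (wmon [g]) - lift (act (fsc c (pmon n) + V') g)
     = fsc c (fmul (shift_prod n) (wmon [g]) - (fsc (up_coeff g n) (shift_prod (n + 1)) + fsc (down_coeff g n) (shift_prod (n - 1))))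
       + (fmul (lift V') (wmon [g]) - lift (act V' g))"
    unfolding s1 s2 by (simp add: fmul_lin fsc_diff fsc_add algebra_simps)
  then show ?case using shift_prod_mult_gen[of n g] add(2) by (simp add: Jideal_add Jideal_fsc)
qed

lemma wmon_minus_lift: "wmon w - lift (phi (wmon w)) \<in> Jlevel 0"
proof (induction w rule: rev_induct)
  case Nil
  have "phi (wmon []) = pmon 0" by (simp add: phi_wmon pmon_def)
  then show ?case by (simp add: fone_def[symmetric] Jideal_zero)
next
  case (snoc g w)
  let ?V = "phi (wmon w)"
  have V: "?V \<in> finsupp" by (simp add: phi_wmon finsupp_act_word)
  have e: "phi (wmon (w @ [g])) = act ?V g" by (simp add: phi_wmon act_word_snoc)
  have "wmon (w @ [g]) - lift (phi (wmon (w @ [g]))) =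
        fmul (wmon w - lift ?V) (wmon [g]) + (fmul (lift ?V) (wmon [g]) - lift (act ?V g))"
    unfolding e by (simp add: fmul_wmon[symmetric] fmul_lin)
  moreover have "fmul (wmon w - lift ?V) (wmon [g]) \<in> Jlevel 0"
    using Jideal_mult_right[OF snoc] by simp
  ultimately show ?case using lift_mult_gen[OF V, of g] by (simp add: Jideal_add)
qed

lemma minus_lift_phi_in_Jideal:
  assumes f: "f \<in> finsupp"
  shows "f - lift (phi f) \<in> Jlevel 0"
  using f
proof (induction rule: finsupp_induct)
  case zero then show ?case by (simp add: flinear_zero[OF flinear_phi] Jideal_zero)
next
  case (add w c g)
  have f1: "fsc c (pmon w) \<in> finsupp" by auto
  have eq: "fsc c (pmon w) + g - lift (phi (fsc c (pmon w) + g)) =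
      fsc c (wmon w - lift (phi (wmon w))) + (g - lift (phi g))"
  proof -
    have p1: "phi (fsc c (pmon w) + g) = fsc c (phi (pmon w)) + phi g"
      using add(1) f1 by (simp add: flinear_add[OF flinear_phi] flinear_fsc[OF flinear_phi])
    have p2: "lift (fsc c (phi (pmon w)) + phi g) = fsc c (lift (phi (pmon w))) + lift (phi g)"
      by (simp add: flinear_add[OF flinear_lift] flinear_fsc[OF flinear_lift] finsupp_fsc finsupp_phi)
    show ?thesis unfolding p1 p2 by (simp add: wmon_pmon fsc_diff algebra_simps)
  qed
  show ?case unfolding eq by (rule Jideal_add[OF Jideal_fsc[OF wmon_minus_lift] add(2)])
qed

lemma act_elem_pmon_shift:
  "act_elem (pmon n) (shift (B n)) = pmon (n + 1)" "act_elem (pmon n) (shift (B' n)) = pmon (n - 1)"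
proof -
  have shift: "act_elem (pmon n) (shift c) = act (pmon n) GD - fsc c (act (pmon n) GB)" for c
    by (simp add: shift_def gD_def gB_def act_elem_diff act_elem_fsc finsupp_fsc act_word_def)
  have "B n = B' n + D n" by (simp add: D_def)
  with D_nonzero[of n] show "act_elem (pmon n) (shift (B n)) = pmon (n + 1)" "act_elem (pmon n) (shift (B' n)) = pmon (n - 1)"
    unfolding shift act_pmon by (auto simp: fun_eq_iff fun_apply_simps pmon_def field_simps)
qed

lemma phi_shift_prod: "phi (shift_prod n) = pmon n"
proof (induction n rule: int_induct[where k=0])
  case base then show ?case by (simp add: phi_def fone_def)
next
  case (step1 i)
  then show ?case by (simp add: shift_prod_succ phi_def act_elem_fmul act_elem_pmon_shift)
next
  case (step2 i)
  then show ?case by (simp add: shift_prod_pred phi_def act_elem_fmul act_elem_pmon_shift)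
qed

lemma phi_lift: "v \<in> finsupp \<Longrightarrow> phi (lift v) = v"
proof (rule flinear_eqI[where \<phi>="\<lambda>v. phi (lift v)" and \<psi>="\<lambda>v. v"])
  show "flinear (\<lambda>v. phi (lift v))" by (rule flinear_comp[OF flinear_phi flinear_lift]) auto
  show "flinear (\<lambda>v. v)" by (simp add: flinear_def)
qed (simp_all add: phi_shift_prod)

lemma coeff_comult:
  "up_coeff (gent (grow g) 1) n * up_coeff (gent 1 (gcol g)) n
     + up_coeff (gent (grow g) 2) n * up_coeff (gent 2 (gcol g)) n = up_coeff g n"
  "down_coeff (gent (grow g) 1) n * down_coeff (gent 1 (gcol g)) n
     + down_coeff (gent (grow g) 2) n * down_coeff (gent 2 (gcol g)) n = down_coeff g n"
  "up_coeff (gent (grow g) 1) n * down_coeff (gent 1 (gcol g)) n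
     + up_coeff (gent (grow g) 2) n * down_coeff (gent 2 (gcol g)) n = 0"
  "down_coeff (gent (grow g) 1) n * up_coeff (gent 1 (gcol g)) n
     + down_coeff (gent (grow g) 2) n * up_coeff (gent 2 (gcol g)) n = 0"
proof -
  have "\<beta> * \<beta>' = B n * B' n" "B n = B' n + D n" by (simp_all add: B_mult_B' D_def)
  with D_nonzero[of n] show
    "up_coeff (gent (grow g) 1) n * up_coeff (gent 1 (gcol g)) n
       + up_coeff (gent (grow g) 2) n * up_coeff (gent 2 (gcol g)) n = up_coeff g n"
    "down_coeff (gent (grow g) 1) n * down_coeff (gent 1 (gcol g)) n
       + down_coeff (gent (grow g) 2) n * down_coeff (gent 2 (gcol g)) n = down_coeff g n"
    "up_coeff (gent (grow g) 1) n * down_coeff (gent 1 (gcol g)) n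
       + up_coeff (gent (grow g) 2) n * down_coeff (gent 2 (gcol g)) n = 0"
    "down_coeff (gent (grow g) 1) n * up_coeff (gent 1 (gcol g)) n
       + down_coeff (gent (grow g) 2) n * up_coeff (gent 2 (gcol g)) n = 0"
    by (cases g; simp add: gent_def field_simps)+
qed

definition act_tensor :: "(int \<times> int \<Rightarrow> complex) \<Rightarrow> gen \<Rightarrow> gen \<Rightarrow> int \<times> int \<Rightarrow> complex" where
  "act_tensor P ga gb = (\<lambda>(m, n). P (m - 1, n - 1) * up_coeff ga (m - 1) * up_coeff gb (n - 1)
      + P (m - 1, n + 1) * up_coeff ga (m - 1) * down_coeff gb (n + 1)
      + P (m + 1, n - 1) * down_coeff ga (m + 1) * up_coeff gb (n - 1)
      + P (m + 1, n + 1) * down_coeff ga (m + 1) * down_coeff gb (n + 1))"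

lemma act_tensor_tens: "act_tensor (tens X Y) ga gb = tens (act X ga) (act Y gb)"
  by (auto simp: act_tensor_def tens_def act_def fun_eq_iff algebra_simps)

lemma flinear_act_tensor: "flinear (\<lambda>P. act_tensor P ga gb)"
  by (auto simp: flinear_def act_tensor_def fun_eq_iff fun_apply_simps fsc_apply algebra_simps)

lemma tmap_phi_mult_gens:
  assumes H: "H \<in> finsupp"
  shows "tmap phi phi (tmul H (tens (wmon [ga]) (wmon [gb]))) = act_tensor (tmap phi phi H) ga gb"
proof (rule flinear_eqI[OF _ _ _ H, where \<phi>="\<lambda>H. tmap phi phi (tmul H (tens (wmon [ga]) (wmon [gb])))"
      and \<psi>="\<lambda>H. act_tensor (tmap phi phi H) ga gb"])
  show "flinear (\<lambda>H. tmap phi phi (tmul H (tens (wmon [ga]) (wmon [gb]))))"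
    by (rule flinear_comp[OF flinear_tmap flinear_tmul_left]) auto
  show "flinear (\<lambda>H. act_tensor (tmap phi phi H) ga gb)"
    by (rule flinear_comp[OF flinear_act_tensor flinear_tmap]) auto
  fix p :: "gen list \<times> gen list"
  obtain u v where p: "p = (u, v)" by (cases p)
  have "tmul (pmon p) (tens (wmon [ga]) (wmon [gb])) = pmon (u @ [ga], v @ [gb])"
    by (simp add: p tens_pmon[symmetric] wmon_pmon tmul_tens fmul_wmon[unfolded wmon_pmon])
  then show "tmap phi phi (tmul (pmon p) (tens (wmon [ga]) (wmon [gb]))) = act_tensor (tmap phi phi (pmon p)) ga gb"
    by (simp add: p tmap_pmon act_tensor_tens phi_wmon act_word_snoc)
qed

lemma act_tensor_lcomult: "act_tensor (lcomult V) x y (m, n) =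
  (if m = n then V (n - 1) * up_coeff x (n - 1) * up_coeff y (n - 1) + V (n + 1) * down_coeff x (n + 1) * down_coeff y (n + 1)
   else if m = n + 2 then V (n + 1) * up_coeff x (n + 1) * down_coeff y (n + 1)
   else if m = n - 2 then V (n - 1) * down_coeff x (n - 1) * up_coeff y (n - 1) else 0)"
proof -
  consider "m = n" | "m \<noteq> n" "m = n + 2" | "m \<noteq> n" "m \<noteq> n + 2" "m = n - 2" | "m \<noteq> n" "m \<noteq> n + 2" "m \<noteq> n - 2"
    by blast
  then show ?thesis
  proof cases
    case 1 then show ?thesis by (simp add: act_tensor_def lcomult_def)
  next
    case 2 then show ?thesis by (simp add: act_tensor_def lcomult_def algebra_simps)
  next
    case 3
    then have nm: "n = m + 2" by simp
    show ?thesis using 3 unfolding nm by (simp add: act_tensor_def lcomult_def algebra_simps)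
  next
    case 4 then show ?thesis by (auto simp: act_tensor_def lcomult_def algebra_simps)
  qed
qed

lemma act_tensor_lcomult_sum:
  "act_tensor (lcomult V) (gent (grow g) 1) (gent 1 (gcol g)) + act_tensor (lcomult V) (gent (grow g) 2) (gent 2 (gcol g))
   = lcomult (act V g)" (is "?S = _")
proof -
  note I = coeff_comult[of g, unfolded One_nat_def]
  have "?S (m, n) = lcomult (act V g) (m, n)" for m n
  proof -
    consider "m = n" | "m \<noteq> n" "m = n + 2" | "m \<noteq> n" "m \<noteq> n + 2" "m = n - 2" | "m \<noteq> n" "m \<noteq> n + 2" "m \<noteq> n - 2"
      by blast
    then show ?thesis
    proof cases
      case 1
      then have "?S (m, n)
        = V (n - 1) * (up_coeff (gent (grow g) 1) (n - 1) * up_coeff (gent 1 (gcol g)) (n - 1) + up_coeff (gent (grow g) 2) (n - 1) * up_coeff (gent 2 (gcol g)) (n - 1))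
        + V (n + 1) * (down_coeff (gent (grow g) 1) (n + 1) * down_coeff (gent 1 (gcol g)) (n + 1) + down_coeff (gent (grow g) 2) (n + 1) * down_coeff (gent 2 (gcol g)) (n + 1))"
        by (simp add: act_tensor_lcomult fun_apply_simps algebra_simps)
      with 1 show ?thesis by (simp add: I lcomult_def act_def One_nat_def)
    next
      case 2
      then have "?S (m, n)
        = V (n + 1) * (up_coeff (gent (grow g) 1) (n + 1) * down_coeff (gent 1 (gcol g)) (n + 1) + up_coeff (gent (grow g) 2) (n + 1) * down_coeff (gent 2 (gcol g)) (n + 1))"
        by (simp add: act_tensor_lcomult fun_apply_simps algebra_simps)
      with 2 show ?thesis by (simp add: I lcomult_def One_nat_def)
    next
      case 3
      then have "?S (m, n)
        = V (n - 1) * (down_coeff (gent (grow g) 1) (n - 1) * up_coeff (gent 1 (gcol g)) (n - 1) + down_coeff (gent (grow g) 2) (n - 1) * up_coeff (gent 2 (gcol g)) (n - 1))"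
        by (simp add: act_tensor_lcomult fun_apply_simps algebra_simps)
      with 3 show ?thesis by (simp add: I lcomult_def One_nat_def)
    next
      case 4
      then show ?thesis by (simp only: plus_fun_apply act_tensor_lcomult) (simp add: lcomult_def)
    qed
  qed
  then show ?thesis by (auto simp: fun_eq_iff)
qed

lemma flinear_lcomult_phi: "flinear (\<lambda>f. lcomult (phi f))"
  using flinear_phi unfolding flinear_def by (simp add: lcomult_add lcomult_fsc)

lemma phi_comult_wmon: "tmap phi phi (fcomult (wmon w)) = lcomult (phi (wmon w))"
proof (induction w rule: rev_induct)
  case Nil
  have "tmap phi phi (fcomult (wmon [])) = tens (phi fone) (phi fone)"
    by (simp add: fone_def[symmetric] fcomult_fone tmap_tens[OF flinear_phi flinear_phi])
  also have "\<dots> = lcomult (phi (wmon []))"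
    by (auto simp: phi_def fone_def pmon_def tens_def lcomult_def fun_eq_iff)
  finally show ?case .
next
  case (snoc g w)
  let ?F = "fcomult (wmon w)"
  have F: "?F \<in> finsupp" by auto
  have "fcomult (wmon (w @ [g])) = tmul ?F (tens (wmon [gent (grow g) 1]) (wmon [gent 1 (gcol g)]))
      + tmul ?F (tens (wmon [gent (grow g) 2]) (wmon [gent 2 (gcol g)]))"
    by (simp add: fmul_wmon[symmetric] fcomult_fmul fcomult_letter tmul_add_right)
  then have "tmap phi phi (fcomult (wmon (w @ [g]))) =
      tmap phi phi (tmul ?F (tens (wmon [gent (grow g) 1]) (wmon [gent 1 (gcol g)])))
      + tmap phi phi (tmul ?F (tens (wmon [gent (grow g) 2]) (wmon [gent 2 (gcol g)])))"
    using F by (simp add: flinear_add[OF flinear_tmap] finsupp_tmul finsupp_tens)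
  also have "\<dots> = act_tensor (lcomult (phi (wmon w))) (gent (grow g) 1) (gent 1 (gcol g))
      + act_tensor (lcomult (phi (wmon w))) (gent (grow g) 2) (gent 2 (gcol g))"
    by (simp only: tmap_phi_mult_gens[OF F] snoc)
  also have "\<dots> = lcomult (act (phi (wmon w)) g)" by (rule act_tensor_lcomult_sum)
  also have "\<dots> = lcomult (phi (wmon (w @ [g])))" by (simp add: phi_wmon act_word_snoc)
  finally show ?case .
qed

lemma phi_comult: "f \<in> finsupp \<Longrightarrow> tmap phi phi (fcomult f) = lcomult (phi f)"
proof (rule flinear_eqI[where \<phi>="\<lambda>f. tmap phi phi (fcomult f)" and \<psi>="\<lambda>f. lcomult (phi f)"])
  show "flinear (\<lambda>f. tmap phi phi (fcomult f))"
    by (rule flinear_comp[OF flinear_tmap flinear_fcomult]) auto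
  show "flinear (\<lambda>f. lcomult (phi f))" by (rule flinear_lcomult_phi)
qed (simp_all add: phi_comult_wmon[unfolded wmon_pmon])

lemma leps_act: "V \<in> finsupp \<Longrightarrow> leps (act V g) = weps [g] * leps V"
proof (induction rule: finsupp_induct)
  case zero then show ?case by (simp add: leps_zero)
next
  case (add n c V')
  have u: "up_coeff g n + down_coeff g n = weps [g]"
  proof -
    have bD: "B n = B' n + D n" by (simp add: D_def)
    show ?thesis using D_nonzero[of n] by (cases g) (simp_all add: weps_def bD field_simps)
  qed
  have a: "act (fsc c (pmon n) + V') g = fsc c (fsc (up_coeff g n) (pmon (n + 1)) + fsc (down_coeff g n) (pmon (n - 1))) + act V' g"
    by (simp add: act_add act_fsc act_pmon)
  have "leps (act (fsc c (pmon n) + V') g) = c * (up_coeff g n + down_coeff g n) + leps (act V' g)"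
    unfolding a using add(1)
    by (simp add: leps_add leps_fsc finsupp_add finsupp_fsc finsupp_act leps_pmon algebra_simps)
  also have "\<dots> = weps [g] * leps (fsc c (pmon n) + V')"
    using add by (simp add: u leps_add leps_fsc finsupp_fsc leps_pmon distrib_left mult.commute)
  finally show ?case .
qed

lemma phi_counit_wmon: "leps (phi (wmon w)) = weps w"
proof (induction w rule: rev_induct)
  case Nil then show ?case by (simp add: phi_wmon leps_pmon weps_def)
next
  case (snoc g w)
  then show ?case by (simp add: phi_wmon act_word_snoc leps_act finsupp_act_word weps_append mult.commute)
qed

lemma phi_counit: "f \<in> finsupp \<Longrightarrow> leps (phi f) = feps f"
proof (induction rule: finsupp_induct)
  case zero then show ?case by (simp add: flinear_zero[OF flinear_phi] leps_zero)
next
  case (add w c g)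
  have f1: "fsc c (pmon w) \<in> finsupp" by auto
  have "phi (fsc c (pmon w) + g) = fsc c (phi (pmon w)) + phi g"
    using add(1) f1 by (simp add: flinear_add[OF flinear_phi] flinear_fsc[OF flinear_phi])
  then have "leps (phi (fsc c (pmon w) + g)) = c * leps (phi (pmon w)) + leps (phi g)"
    by (simp add: leps_add leps_fsc finsupp_fsc finsupp_phi)
  also have "\<dots> = feps (fsc c (pmon w) + g)"
    using add f1 by (simp add: feps_add feps_fsc phi_counit_wmon[unfolded wmon_pmon] feps_wmon[unfolded wmon_pmon])
  finally show ?case .
qed

theorem coalg_iso_laurent_Jideal: "coalg_iso_laurent (Jideal q (\<beta> + \<beta>') (\<beta> * \<beta>'))"
  unfolding coalg_iso_laurent_def
proof (intro exI[of _ phi] conjI ballI)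
  show "flinear phi" by (rule flinear_phi)
  show "phi ` finsupp \<subseteq> finsupp" by auto
  show "finsupp \<subseteq> phi ` finsupp"
  proof
    fix v :: "int \<Rightarrow> complex" assume "v \<in> finsupp"
    then show "v \<in> phi ` finsupp" using phi_lift by (intro rev_image_eqI[of "lift v"]) auto
  qed
next
  fix f :: fa assume f: "f \<in> finsupp"
  show "phi f = 0 \<longleftrightarrow> f \<in> Jideal q (\<beta> + \<beta>') (\<beta> * \<beta>')"
  proof
    assume "phi f = 0"
    then show "f \<in> Jideal q (\<beta> + \<beta>') (\<beta> * \<beta>')" using minus_lift_phi_in_Jideal[OF f] by (simp add: Jlevel_0)
  qed (rule phi_Jideal)
  show "tmap phi phi (fcomult f) = lcomult (phi f)" by (rule phi_comult[OF f])
  show "leps (phi f) = feps f" by (rule phi_counit[OF f])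
qed

end

section \<open>The parameters \<open>(\<mu>, \<nu>)\<close>\<close>

lemma power_int_eq_1_imp_zero:
  fixes q :: complex
  assumes not_root: "\<forall>n::nat. n > 0 \<longrightarrow> q ^ n \<noteq> 1" and "q powi k = 1"
  shows "k = 0"
proof (rule ccontr)
  assume "k \<noteq> 0"
  have "q ^ nat \<bar>k\<bar> = 1"
  proof (cases "k \<ge> 0")
    case True then show ?thesis using assms(2) by (simp add: power_int_def)
  next
    case False then show ?thesis using assms(2) by (simp add: power_int_def field_simps)
  qed
  with not_root \<open>k \<noteq> 0\<close> show False by auto
qed

lemma sin_add_mult_sin_diff:
  fixes a b :: real
  shows "sin (a + b) * sin (a - b) = (cos b)\<^sup>2 - (cos a)\<^sup>2"
proof -
  have "sin (a + b) * sin (a - b) = (sin a * cos b)\<^sup>2 - (cos a * sin b)\<^sup>2"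
    unfolding sin_add sin_diff by (simp add: power2_eq_square algebra_simps)
  also have "\<dots> = (sin a)\<^sup>2 * (cos b)\<^sup>2 - (cos a)\<^sup>2 * (sin b)\<^sup>2" by (simp add: power_mult_distrib)
  also have "\<dots> = (cos b)\<^sup>2 - (cos a)\<^sup>2" by (simp add: sin_squared_eq algebra_simps)
  finally show ?thesis .
qed

lemma cis_plus_cis_minus: "cis x + cis (- x) = complex_of_real (2 * cos x)"
  by (simp add: complex_eq_iff)

lemma elliptic_roots:
  fixes \<phi> \<psi> \<nu> :: real and q s :: complex
  assumes q: "q = cis \<phi>" and s: "s ^ 2 = q" and \<nu>: "\<nu> > 0"
  defines "\<beta> \<equiv> s * complex_of_real (sqrt \<nu>) * cis \<psi>" and "\<beta>' \<equiv> s * complex_of_real (sqrt \<nu>) * cis (- \<psi>)"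
  shows "\<beta> * q powi (- k) + \<beta>' * q powi k = 2 * s * complex_of_real (sqrt \<nu> * cos (\<psi> - of_int k * \<phi>))"
    and "\<beta> * q powi (- k) = \<beta>' * q powi k \<longleftrightarrow> sin (\<psi> - of_int k * \<phi>) = 0"
    and "\<beta> * \<beta>' = q * complex_of_real \<nu>"
proof -
  have s0: "s \<noteq> 0" using s q by auto
  have \<beta>k: "\<beta> * q powi (- k) = s * complex_of_real (sqrt \<nu>) * cis (\<psi> - of_int k * \<phi>)"
    and \<beta>'k: "\<beta>' * q powi k = s * complex_of_real (sqrt \<nu>) * cis (- (\<psi> - of_int k * \<phi>))"
    by (simp_all add: \<beta>_def \<beta>'_def q cis_power_int mult.assoc cis_mult)
  show "\<beta> * q powi (- k) + \<beta>' * q powi k = 2 * s * complex_of_real (sqrt \<nu> * cos (\<psi> - of_int k * \<phi>))"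
    unfolding \<beta>k \<beta>'k distrib_left[symmetric] cis_plus_cis_minus by (simp add: mult_ac)
  have cis_eq: "cis a = cis (- a) \<longleftrightarrow> sin a = 0" for a by (simp add: complex_eq_iff)
  show "\<beta> * q powi (- k) = \<beta>' * q powi k \<longleftrightarrow> sin (\<psi> - of_int k * \<phi>) = 0"
    unfolding \<beta>k \<beta>'k mult_cancel_left cis_eq using s0 \<nu> by simp
  show "\<beta> * \<beta>' = q * complex_of_real \<nu>"
    using \<nu> by (simp add: \<beta>_def \<beta>'_def s[symmetric] power2_eq_square cis_mult mult_ac
                          flip: of_real_mult)
qed

lemma shift_series_iso:
  assumes q: "q = cis \<phi>" and s: "s ^ 2 = q" and \<nu>: "\<nu> > 0"
    and \<mu>: "\<mu> / sqrt \<nu> = cos \<psi>" and \<mu>n: "\<mu>n / sqrt \<nu> = cos (\<psi> + of_int n * \<phi>)"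
  shows "coalg_rmod_iso (Jset q s \<mu> \<nu>) (Jset q s \<mu>n \<nu>)"
proof -
  define \<beta> where "\<beta> = s * complex_of_real (sqrt \<nu>) * cis \<psi>"
  define \<beta>' where "\<beta>' = s * complex_of_real (sqrt \<nu>) * cis (- \<psi>)"
  note roots = elliptic_roots[OF q s \<nu>, where \<psi> = \<psi>, folded \<beta>_def \<beta>'_def]
  have "\<mu> = sqrt \<nu> * cos (\<psi> - of_int 0 * \<phi>)" "\<mu>n = sqrt \<nu> * cos (\<psi> - of_int (- n) * \<phi>)"
    using \<mu> \<mu>n \<nu> by (simp_all add: field_simps)
  then have "Jset q s \<mu> \<nu> = Jideal q (\<beta> + \<beta>') (\<beta> * \<beta>')"
    and "Jset q s \<mu>n \<nu> = Jideal q (\<beta> * q powi (- (- n)) + \<beta>' * q powi (- n)) (\<beta> * \<beta>')"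
    using roots(1)[of 0] roots(1)[of "- n"] by (simp_all add: Jset_eq_Jideal roots(3))
  with shift_chain_iso[of q \<beta> \<beta>' "- n"] q show ?thesis by simp
qed

lemma coalg_iso_laurent_elliptic:
  assumes q: "q = cis \<phi>" and s: "s ^ 2 = q" and \<nu>: "\<nu> > 0" and \<mu>: "\<mu> / sqrt \<nu> = cos \<psi>"
    and non_special: "\<forall>l::int. (cos \<psi>)\<^sup>2 \<noteq> (cos (of_int l * \<phi>))\<^sup>2"
  shows "coalg_iso_laurent (Jset q s \<mu> \<nu>)"
proof -
  define \<beta> where "\<beta> = s * complex_of_real (sqrt \<nu>) * cis \<psi>"
  define \<beta>' where "\<beta>' = s * complex_of_real (sqrt \<nu>) * cis (- \<psi>)"
  note roots = elliptic_roots[OF q s \<nu>, where \<psi> = \<psi>, folded \<beta>_def \<beta>'_def]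
  have "\<beta> * q powi (- k) \<noteq> \<beta>' * q powi k" for k
    using non_special[rule_format, of k] sin_add_mult_sin_diff[of \<psi> "of_int k * \<phi>"] by (auto simp: roots(2))
  then interpret laurent_rep q \<beta> \<beta>' using q by unfold_locales auto
  have "\<mu> = sqrt \<nu> * cos (\<psi> - of_int 0 * \<phi>)" using \<mu> \<nu> by (simp add: field_simps)
  then show ?thesis
    using coalg_iso_laurent_Jideal roots(1)[of 0] by (simp add: Jset_eq_Jideal roots(3))
qed

lemma coalg_iso_laurent_hyperbolic:
  assumes q: "q = cis \<phi>" and not_root: "\<forall>n::nat. n > 0 \<longrightarrow> q ^ n \<noteq> 1" and s: "s ^ 2 = q"
    and hyp: "\<mu>\<^sup>2 > \<nu>"
  shows "coalg_iso_laurent (Jset q s \<mu> \<nu>)"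
proof -
  define r where "r = sqrt (\<mu>\<^sup>2 - \<nu>)"
  have r: "r > 0" "r\<^sup>2 = \<mu>\<^sup>2 - \<nu>" using hyp by (simp_all add: r_def)
  define \<beta> where "\<beta> = s * complex_of_real (\<mu> + r)"
  define \<beta>' where "\<beta>' = s * complex_of_real (\<mu> - r)"
  have q0: "q \<noteq> 0" and s0: "s \<noteq> 0" using q s by auto
  have "\<beta> * \<beta>' = s\<^sup>2 * complex_of_real ((\<mu> + r) * (\<mu> - r))"
    by (simp add: \<beta>_def \<beta>'_def power2_eq_square mult_ac)
  also have "(\<mu> + r) * (\<mu> - r) = \<nu>" using r by (simp add: algebra_simps power2_eq_square)
  finally have prod: "\<beta> * \<beta>' = q * complex_of_real \<nu>" using s by simp
  have unit: "q powi m = cis (of_int m * \<phi>)" for m by (simp add: q cis_power_int)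
  have distinct: "\<beta> * q powi (- k) \<noteq> \<beta>' * q powi k" for k
  proof
    define w where "w = q powi k * q powi k"
    assume "\<beta> * q powi (- k) = \<beta>' * q powi k"
    moreover have "\<beta> = \<beta> * q powi (- k) * q powi k" using q0 by (simp add: power_int_minus power_int_not_zero)
    ultimately have "\<beta> = \<beta>' * w" by (simp add: w_def mult.assoc)
    then have eq: "complex_of_real (\<mu> + r) = complex_of_real (\<mu> - r) * w"
      using s0 by (simp add: \<beta>_def \<beta>'_def mult.assoc)
    have "norm w = 1" by (simp add: w_def unit norm_mult)
    with arg_cong[OF eq, of norm] have "norm (complex_of_real (\<mu> + r)) = norm (complex_of_real (\<mu> - r))"
      by (simp only: norm_mult mult_1_right)
    then have "\<bar>\<mu> + r\<bar> = \<bar>\<mu> - r\<bar>" by (simp only: norm_of_real)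
    then have "\<mu> = 0" using r(1) by (auto simp: abs_eq_iff)
    with eq have "complex_of_real r * (w + 1) = 0" by (simp add: algebra_simps eq_neg_iff_add_eq_0)
    then have w: "w = - 1" using r(1) by (simp add: eq_neg_iff_add_eq_0)
    have "q powi (4 * k) = w * w" by (simp add: w_def unit cis_mult algebra_simps)
    then have "k = 0" using power_int_eq_1_imp_zero[OF not_root, of "4 * k"] w by simp
    with w show False by (simp add: w_def)
  qed
  interpret laurent_rep q \<beta> \<beta>' using q0 distinct by unfold_locales
  have "\<beta> + \<beta>' = 2 * s * complex_of_real \<mu>" by (simp add: \<beta>_def \<beta>'_def algebra_simps)
  then show ?thesis using coalg_iso_laurent_Jideal by (simp add: Jset_eq_Jideal prod)
qed

lemma special_iso_extremal:
  assumes q: "q = cis \<phi>" and s: "s ^ 2 = q" and \<nu>: "\<nu> > 0" and \<mu>: "\<mu> / sqrt \<nu> = cos \<psi>"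
    and special: "(cos \<psi>)\<^sup>2 = (cos (of_int l * \<phi>))\<^sup>2"
  obtains \<epsilon> :: real where "\<epsilon> = 1 \<or> \<epsilon> = -1"
    and "coalg_rmod_iso (Jset q s \<mu> \<nu>) (Jset q s (\<epsilon> * sqrt \<nu>) \<nu>)"
    and "coalg_rmod_iso (Jset q s (\<epsilon> * sqrt \<nu>) \<nu>) (Jset q s \<mu> \<nu>)"
proof -
  have \<nu>': "sqrt \<nu> > 0" using \<nu> by simp
  \<comment> \<open>Only \<open>\<mu> / \<surd>\<nu>\<close> enters \<open>shift_series_iso\<close>, so the angle \<open>\<psi>\<close> may be replaced by
    \<open>l \<phi>\<close> or \<open>l \<phi> + pi\<close>, which rotate to \<open>0\<close> and \<open>pi\<close>.\<close>
  consider "\<mu> / sqrt \<nu> = cos (of_int l * \<phi>)" | "\<mu> / sqrt \<nu> = cos (of_int l * \<phi> + pi)"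
    using special \<mu> by (auto simp: power2_eq_iff)
  then show ?thesis
  proof cases
    case 1
    have "coalg_rmod_iso (Jset q s \<mu> \<nu>) (Jset q s (1 * sqrt \<nu>) \<nu>)"
      by (rule shift_series_iso[OF q s \<nu>, where \<psi> = "of_int l * \<phi>" and n = "- l"]) (use 1 \<nu>' in simp_all)
    moreover have "coalg_rmod_iso (Jset q s (1 * sqrt \<nu>) \<nu>) (Jset q s \<mu> \<nu>)"
      by (rule shift_series_iso[OF q s \<nu>, where \<psi> = 0 and n = l]) (use 1 \<nu>' in simp_all)
    ultimately show ?thesis by (rule that[of 1, rotated]) simp
  next
    case 2
    have "coalg_rmod_iso (Jset q s \<mu> \<nu>) (Jset q s (- 1 * sqrt \<nu>) \<nu>)"
      by (rule shift_series_iso[OF q s \<nu>, where \<psi> = "of_int l * \<phi> + pi" and n = "- l"]) (use 2 \<nu>' in simp_all)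
    moreover have "coalg_rmod_iso (Jset q s (- 1 * sqrt \<nu>) \<nu>) (Jset q s \<mu> \<nu>)"
      by (rule shift_series_iso[OF q s \<nu>, where \<psi> = pi and n = l]) (use 2 \<nu>' in \<open>simp_all add: add.commute\<close>)
    ultimately show ?thesis by (rule that[of "- 1", rotated]) simp
  qed
qed

lemma extremal_rescale_iso:
  assumes \<nu>: "\<nu> > 0" and \<nu>': "\<nu>' > 0" and \<epsilon>: "\<epsilon> = 1 \<or> \<epsilon> = -1" and \<epsilon>': "\<epsilon>' = 1 \<or> \<epsilon>' = -1"
  defines "t \<equiv> \<epsilon> * \<epsilon>' * sqrt \<nu>' / sqrt \<nu>"
  shows "coalg_iso_map (Jset q s (\<epsilon> * sqrt \<nu>) \<nu>) (Jset q s (\<epsilon>' * sqrt \<nu>') \<nu>') (rescale (complex_of_real t))"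
proof -
  have "t \<noteq> 0" "\<epsilon> * sqrt \<nu> * t = \<epsilon>' * sqrt \<nu>'" "\<nu> * t\<^sup>2 = \<nu>'"
    unfolding t_def using \<nu> \<nu>' \<epsilon> \<epsilon>' by (auto simp: power2_eq_square real_sqrt_mult[symmetric])
  then show ?thesis
    using rescale_iso[of "complex_of_real t" q "2 * s * complex_of_real (\<epsilon> * sqrt \<nu>)" "q * complex_of_real \<nu>"]
    by (simp add: Jset_eq_Jideal mult.assoc flip: of_real_mult of_real_power)
qed

lemma special_series_iso:
  assumes q: "q = cis \<phi>" and s: "s ^ 2 = q"
    and \<nu>: "\<nu> > 0" and \<mu>: "\<mu> / sqrt \<nu> = cos \<psi>" and l: "(cos \<psi>)\<^sup>2 = (cos (of_int l * \<phi>))\<^sup>2"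
    and \<nu>': "\<nu>' > 0" and \<mu>': "\<mu>' / sqrt \<nu>' = cos \<psi>'" and l': "(cos \<psi>')\<^sup>2 = (cos (of_int l' * \<phi>))\<^sup>2"
  shows "\<exists>F. coalg_iso_map (Jset q s \<mu> \<nu>) (Jset q s \<mu>' \<nu>') F"
proof -
  obtain \<epsilon> where \<epsilon>: "\<epsilon> = 1 \<or> \<epsilon> = -1" and "coalg_rmod_iso (Jset q s \<mu> \<nu>) (Jset q s (\<epsilon> * sqrt \<nu>) \<nu>)"
    using special_iso_extremal[OF q s \<nu> \<mu> l] by metis
  then obtain F where F: "coalg_iso_map (Jset q s \<mu> \<nu>) (Jset q s (\<epsilon> * sqrt \<nu>) \<nu>) F"
    unfolding coalg_rmod_iso_def by blast
  obtain \<epsilon>' where \<epsilon>': "\<epsilon>' = 1 \<or> \<epsilon>' = -1" and "coalg_rmod_iso (Jset q s (\<epsilon>' * sqrt \<nu>') \<nu>') (Jset q s \<mu>' \<nu>')"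
    using special_iso_extremal[OF q s \<nu>' \<mu>' l'] by metis
  then obtain G where G: "coalg_iso_map (Jset q s (\<epsilon>' * sqrt \<nu>') \<nu>') (Jset q s \<mu>' \<nu>') G"
    unfolding coalg_rmod_iso_def by blast
  note R = extremal_rescale_iso[OF \<nu> \<nu>' \<epsilon> \<epsilon>', of q s]
  show ?thesis
    using coalg_iso_map_comp[OF coalg_iso_map_comp[OF F[unfolded Jset_eq_Jideal] R[unfolded Jset_eq_Jideal]]
        G[unfolded Jset_eq_Jideal]]
    unfolding Jset_eq_Jideal by blast
qed

theorem proposition6:
  fixes q s :: complex and \<phi> :: real
  assumes q_def: "q = exp (\<i> * complex_of_real \<phi>)"
    and not_root: "\<forall>n::nat. n > 0 \<longrightarrow> q ^ n \<noteq> 1"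
    and sqrt_q: "s ^ 2 = q"
  shows
    "(\<forall>\<mu> \<nu> :: real. \<mu>\<^sup>2 > \<nu> \<longrightarrow> coalg_iso_laurent (Jset q s \<mu> \<nu>))
   \<and> (\<forall>\<mu> \<nu> \<psi> :: real. \<nu> > 0 \<and> \<mu> / sqrt \<nu> = cos \<psi> \<and> cos \<psi> < 1
        \<and> (\<forall>l::int. (cos \<psi>)\<^sup>2 \<noteq> (cos (of_int l * \<phi>))\<^sup>2)
        \<longrightarrow> coalg_iso_laurent (Jset q s \<mu> \<nu>))
   \<and> (\<forall>\<mu> \<nu> \<psi> \<mu>' \<nu>' \<psi>' :: real.
        \<nu> > 0 \<and> \<mu> / sqrt \<nu> = cos \<psi> \<and> (\<exists>l::int. (cos \<psi>)\<^sup>2 = (cos (of_int l * \<phi>))\<^sup>2)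
      \<and> \<nu>' > 0 \<and> \<mu>' / sqrt \<nu>' = cos \<psi>' \<and> (\<exists>l::int. (cos \<psi>')\<^sup>2 = (cos (of_int l * \<phi>))\<^sup>2)
        \<longrightarrow> (\<exists>F. coalg_iso_map (Jset q s \<mu> \<nu>) (Jset q s \<mu>' \<nu>') F))
   \<and> (\<forall>\<mu> \<nu> \<psi> \<mu>n :: real. \<forall>n::int.
        \<nu> > 0 \<and> \<mu> / sqrt \<nu> = cos \<psi> \<and> cos \<psi> \<le> 1
      \<and> \<mu>n / sqrt \<nu> = cos (\<psi> + of_int n * \<phi>)
        \<longrightarrow> (\<exists>F. coalg_iso_map (Jset q s \<mu> \<nu>) (Jset q s \<mu>n \<nu>) F
                 \<and> rmod_map (Jset q s \<mu>n \<nu>) F))"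
proof -
  have q: "q = cis \<phi>" using q_def by (simp add: cis_conv_exp)
  show ?thesis
    using coalg_iso_laurent_hyperbolic[OF q not_root sqrt_q] coalg_iso_laurent_elliptic[OF q sqrt_q]
      special_series_iso[OF q sqrt_q] shift_series_iso[OF q sqrt_q]
    unfolding coalg_rmod_iso_def by blast
qed

end
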